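(* If $(\alpha,\beta)$ is a Bailey pair relative to $(a,q)$, then \begin{align*} &\sum_{n=0}^\infty(\sqrt a;q)_n(-1)^na^{n/2}q^{\frac{n(n+1)}2}\beta_n=\frac{(\sqrt aq;q)_\infty}{(aq;q)_\infty}\sum_{n=0}^\infty\frac{(1-\sqrt a)(-1)^na^{n/2}q^{\frac{n(n+1)}2}\alpha_n}{1-\sqrt aq^n},\\ &\sum_{n=0}^\infty(\sqrt{aq};q)_n(-1)^na^{n/2}q^{\frac{n^2}2}\beta_n=\frac{(\sqrt{aq};q)_\infty}{(aq;q)_\infty}\sum_{n=0}^\infty(-1)^na^{n/2}q^{\frac{n^2}2}\alpha_n,\\ &\sum_{n=0}^\infty(z\sqrt aq^{-1/2},z^{-1}\sqrt aq^{-1/2};q)_nq^n\beta_n\\ &\quad=\frac{(z\sqrt aq^{-1/2},z^{-1}\sqrt aq^{-1/2};q)_\infty}{(q,aq;q)_\infty}\sum_{n=0}^\infty\frac{(1-(z+z^{-1})\sqrt aq^{n+1/2}+aq^{2n})q^n\alpha_n}{(1-z\sqrt aq^{n-1/2})(1-z\sqrt aq^{n+1/2})(1-z^{-1}\sqrt aq^{n-1/2})(1-z^{-1}\sqrt aq^{n+1/2})},\\ &\sum_{n=0}^\infty(z\sqrt aq^{-1/2},z^{-1}\sqrt aq^{-1/2};q)_nq^{2n}\beta_n\\ &\quad=\frac{(z\sqrt aq^{-1/2},z^{-1}\sqrt aq^{-1/2};q)_\infty}{(q,aq;q)_\infty}\sum_{n=0}^\infty\frac{(1-q)q^{2n}\alpha_n}{(1-z\sqrt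 aq^{n-1/2})(1-z\sqrt aq^{n+1/2})(1-z^{-1}\sqrt aq^{n-1/2})(1-z^{-1}\sqrt aq^{n+1/2})},\\ &\sum_{n=0}^\infty\frac{(a^{3/2}q^{-3/2};q^3)_nq^n\beta_n}{(\sqrt aq^{-1/2};q)_n}=\frac{(a^{3/2}q^{-3/2};q^3)_\infty}{(q,aq,\sqrt aq^{-1/2};q)_\infty}\sum_{n=0}^\infty\frac{(1-\sqrt aq^{n-1/2})(1-\sqrt aq^{n+1/2})(1+\sqrt aq^{n+1/2}+aq^{2n})q^n\alpha_n}{(1-a^{3/2}q^{3n-3/2})(1-a^{3/2}q^{3n+3/2})},\\ &\sum_{n=0}^\infty\frac{(a^{3/2}q^{-3/2};q^3)_nq^{2n}\beta_n}{(\sqrt aq^{-1/2};q)_n}=\frac{(a^{3/2}q^{-3/2};q^3)_\infty}{(q,aq,\sqrt aq^{-1/2};q)_\infty}\sum_{n=0}^\infty\frac{(1-q)(1-\sqrt aq^{n-1/2})(1-\sqrt aq^{n+1/2})q^{2n}\alpha_n}{(1-a^{3/2}q^{3n-3/2})(1-a^{3/2}q^{3n+3/2})}. \end{align*} If $(\alpha,\beta)$ is a Bailey pair relative to $(a,q^2)$, then \begin{align*} \sum_{n=0}^\infty(-\sqrt a;q)_{2n}q^n\beta_n=\frac{(-\sqrt aq;q)_\infty}{(aq^2,q;q^2)_\infty}\sum_{n=0}^\infty\frac{(1+\sqrt a)q^n\alpha_n}{1+\sqrt aq^{2n}}. \end{align*}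
   Context: Notation: $(z;q)_n=\prod_{j=0}^{n-1}(1-zq^j)$, $(z;q)_\infty=\prod_{j\ge0}(1-zq^j)$, $(z_1,\dots,z_k;q)_n=(z_1;q)_n\cdots(z_k;q)_n$ (also for $n=\infty$); $|q|<1$, and all series are assumed convergent. A pair of sequences $(\alpha_n)_{n\ge0},(\beta_n)_{n\ge0}$ is a Bailey pair relative to $(a,q)$ if $\beta_n=\sum_{k=0}^n\frac{\alpha_k}{(q;q)_{n-k}(aq;q)_{n+k}}$ for all $n\ge0$. *)

theory Defs
  imports "HOL-Analysis.Analysis"
begin

definition qpoch :: "complex \<Rightarrow> complex \<Rightarrow> nat \<Rightarrow> complex" where
  "qpoch z q n = (\<Prod>j<n. 1 - z * q ^ j)"

definition qpoch_inf :: "complex \<Rightarrow> complex \<Rightarrow> complex" where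
  "qpoch_inf z q = prodinf (\<lambda>j. 1 - z * q ^ j)"

definition bailey_pair :: "(nat \<Rightarrow> complex) \<Rightarrow> (nat \<Rightarrow> complex) \<Rightarrow> complex \<Rightarrow> complex \<Rightarrow> bool" where
  "bailey_pair \<alpha> \<beta> a q \<longleftrightarrow>
     (\<forall>n. \<beta> n = (\<Sum>k\<le>n. \<alpha> k / (qpoch q q (n - k) * qpoch (a * q) q (n + k))))"

end

theory Submission
  imports Defs
begin

text \<open>
  All seven identities are instances of a limiting form of Bailey's lemma: for a Bailey pair
  relative to (a,q), |x| < 1 and rho y = a q,
    sum_n (rho;q)_n P_n(x,y) beta_n = (y;q)_inf (x rho;q)_inf / ((aq;q)_inf (x;q)_inf)
      * sum_k (rho;q)_k P_k(x,y) / ((y;q)_k (x rho;q)_k) alpha_k,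
  where P_n(x,y) = prod_{j<n} (x - y q^j).  After inserting the definition of beta_n, every column
  sum is a q-Gauss sum, which follows from the q-binomial theorem through a functional equation
  in y; the interchange of summation is justified because the tails of the columns decay
  geometrically relative to the column sums.

  The first two identities are instances with x = 0, and the last one is the instance x = q over
  the base q^2.  For the third and fourth take rho = A and y = q^2 B, where A = z sqrt(a/q) and
  B = sqrt(a/q)/z: the fourth is the instance x = q^2, and the third is (1 - B) times the instance
  x = q plus B times the instance x = q^2, because (1 - B) (Bq;q)_n + B q^n (B;q)_n = (B;q)_n.
  The fifth and sixth are the third and fourth at z = omega, a primitive cube root of unity, where
  (omega u;q)_n (u/omega;q)_n (u;q)_n = (u^3;q^3)_n.
\<close>

section \<open>q-Pochhammer symbols\<close>

lemma qpoch_0 [simp]: "qpoch z q 0 = 1"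
  by (simp add: qpoch_def)

lemma qpoch_zero_left [simp]: "qpoch 0 q n = 1"
  by (simp add: qpoch_def)

lemma qpoch_inf_zero_left [simp]: "qpoch_inf 0 q = 1"
  by (simp add: qpoch_inf_def)

lemma qpoch_Suc: "qpoch z q (Suc n) = qpoch z q n * (1 - z * q ^ n)"
  by (simp add: qpoch_def)

lemma qpoch_Suc_shift: "qpoch z q (Suc n) = (1 - z) * qpoch (z * q) q n"
  unfolding qpoch_def by (subst prod.lessThan_Suc_shift) (simp add: mult.assoc)

lemma qpoch_add: "qpoch z q (m + n) = qpoch z q m * qpoch (z * q ^ m) q n"
  by (induction n) (simp_all add: qpoch_Suc power_add mult_ac)

lemma qpoch_shift_ratio: "qpoch z q n * (1 - z * q ^ n) = (1 - z) * qpoch (z * q) q n"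
  using qpoch_Suc[of z q n] qpoch_Suc_shift[of z q n] by simp

lemma qpoch_shift2_ratio:
  "qpoch z q n * ((1 - z * q ^ n) * (1 - z * q * q ^ n)) = (1 - z) * (1 - z * q) * qpoch (q\<^sup>2 * z) q n"
  using qpoch_add[of z q n 2] qpoch_add[of z q 2 n] by (simp add: numeral_2_eq_2 qpoch_def mult_ac)

lemma qpoch_double: "qpoch z q (2 * n) = qpoch z (q\<^sup>2) n * qpoch (z * q) (q\<^sup>2) n"
proof (induction n)
  case (Suc n)
  have "2 * Suc n = Suc (Suc (2 * n))" by simp
  then show ?case
    using Suc by (simp add: qpoch_Suc power_mult[symmetric] power_add mult_ac)
qed simp

lemma qpoch_nonzero: "(\<And>j. 1 - z * q ^ j \<noteq> 0) \<Longrightarrow> qpoch z q n \<noteq> 0"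
  by (simp add: qpoch_def)

lemma qpoch_factor_nonzero:
  fixes q x :: complex
  assumes "norm q < 1" "norm x < 1"
  shows "1 - x * q ^ j \<noteq> 0"
proof -
  have "norm (x * q ^ j) \<le> norm x"
    using assms(1) by (simp add: norm_mult norm_power mult_left_le power_le_one)
  then show ?thesis using assms(2) by auto
qed

lemma norm_mult_power_le: "norm (q :: complex) < 1 \<Longrightarrow> norm (w * q ^ n) \<le> norm w"
  by (simp add: norm_mult norm_power mult_left_le power_le_one)

lemma convergent_prod_qpoch:
  fixes z q :: complex
  assumes "norm q < 1"
  shows "convergent_prod (\<lambda>j. 1 - z * q ^ j)"
proof -
  have "(\<lambda>j. norm ((1 - z * q ^ j) - 1)) = (\<lambda>j. norm z * norm q ^ j)"
    by (simp add: norm_mult norm_power)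
  moreover have "summable (\<lambda>j. norm z * norm q ^ j)"
    using assms by (intro summable_mult summable_geometric) simp
  ultimately show ?thesis
    by (metis abs_convergent_prod_imp_convergent_prod summable_imp_abs_convergent_prod)
qed

lemma qpoch_LIMSEQ:
  assumes "norm q < 1"
  shows "(\<lambda>n. qpoch z q n) \<longlonglongrightarrow> qpoch_inf z q"
proof -
  have "(\<lambda>n. \<Prod>j\<le>n. 1 - z * q ^ j) \<longlonglongrightarrow> qpoch_inf z q"
    unfolding qpoch_inf_def by (rule convergent_prod_LIMSEQ[OF convergent_prod_qpoch[OF assms]])
  then have "(\<lambda>n. qpoch z q (Suc n)) \<longlonglongrightarrow> qpoch_inf z q"
    by (simp add: qpoch_def lessThan_Suc_atMost)
  then show ?thesis by (rule LIMSEQ_imp_Suc)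
qed

lemma qpoch_inf_nonzero:
  assumes "norm q < 1" "\<And>j. 1 - z * q ^ j \<noteq> 0"
  shows "qpoch_inf z q \<noteq> 0"
  unfolding qpoch_inf_def by (rule prodinf_nonzero[OF convergent_prod_qpoch[OF assms(1)] assms(2)])

lemma qpoch_inf_split:
  assumes "norm q < 1"
  shows "qpoch_inf z q = qpoch z q m * qpoch_inf (z * q ^ m) q"
proof -
  have "(\<lambda>n. qpoch z q (m + n)) \<longlonglongrightarrow> qpoch_inf z q"
    using LIMSEQ_ignore_initial_segment[OF qpoch_LIMSEQ[OF assms], of z m] by (simp add: add.commute)
  moreover have "(\<lambda>n. qpoch z q (m + n)) \<longlonglongrightarrow> qpoch z q m * qpoch_inf (z * q ^ m) q"
    unfolding qpoch_add by (intro tendsto_mult tendsto_const qpoch_LIMSEQ assms)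
  ultimately show ?thesis using LIMSEQ_unique by blast
qed

lemma qpoch_inf_Suc_shift:
  assumes "norm q < 1"
  shows "qpoch_inf z q = (1 - z) * qpoch_inf (z * q) q"
  using qpoch_inf_split[OF assms, of z 1] by (simp add: qpoch_def)

lemma qpoch_inf_shift2:
  assumes "norm q < 1"
  shows "qpoch_inf z q = (1 - z) * (1 - z * q) * qpoch_inf (q\<^sup>2 * z) q"
  using qpoch_inf_split[OF assms, of z 2] by (simp add: numeral_2_eq_2 qpoch_def mult_ac)

lemma qpoch_inf_double:
  assumes q: "norm q < 1"
  shows "qpoch_inf z q = qpoch_inf z (q\<^sup>2) * qpoch_inf (z * q) (q\<^sup>2)"
proof -
  have q2: "norm (q\<^sup>2) < 1" using q by (simp add: norm_power power_less_one_iff)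
  have "(\<lambda>n. qpoch z q (2 * n)) \<longlonglongrightarrow> qpoch_inf z q"
    by (rule LIMSEQ_subseq_LIMSEQ[OF qpoch_LIMSEQ[OF q], unfolded o_def]) (simp add: strict_mono_def)
  moreover have "(\<lambda>n. qpoch z q (2 * n)) \<longlonglongrightarrow> qpoch_inf z (q\<^sup>2) * qpoch_inf (z * q) (q\<^sup>2)"
    unfolding qpoch_double by (intro tendsto_mult qpoch_LIMSEQ q2)
  ultimately show ?thesis using LIMSEQ_unique by blast
qed

lemma norm_qpoch_le:
  assumes "norm q < 1"
  shows "norm (qpoch z q n) \<le> exp (norm z / (1 - norm q))"
proof -
  have "norm (qpoch z q n) \<le> (\<Prod>j<n. exp (norm z * norm q ^ j))"
    unfolding qpoch_def prod_norm[symmetric]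
  proof (rule prod_mono, safe)
    fix j
    have "norm (1 - z * q ^ j) \<le> 1 + norm z * norm q ^ j"
      using norm_triangle_ineq4[of 1 "z * q ^ j"] by (simp add: norm_mult norm_power)
    also have "\<dots> \<le> exp (norm z * norm q ^ j)" by (rule exp_ge_add_one_self)
    finally show "norm (1 - z * q ^ j) \<le> exp (norm z * norm q ^ j)" .
  qed simp
  also have "\<dots> = exp (norm z * (\<Sum>j<n. norm q ^ j))"
    by (simp add: exp_sum sum_distrib_left)
  also have "\<dots> \<le> exp (norm z * (\<Sum>j. norm q ^ j))"
    using assms by (intro exp_mono mult_left_mono sum_le_suminf summable_geometric) auto
  also have "\<dots> = exp (norm z / (1 - norm q))"
    using assms by (simp add: suminf_geometric divide_inverse)
  finally show ?thesis .
qed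

lemma LIMSEQ_nonzero_imp_bounded_below:
  fixes X :: "nat \<Rightarrow> 'a :: real_normed_vector"
  assumes "X \<longlonglongrightarrow> L" "L \<noteq> 0" "\<And>n. X n \<noteq> 0"
  shows "\<exists>c>0. \<forall>n. c \<le> norm (X n)"
proof -
  obtain N where N: "\<And>n. n \<ge> N \<Longrightarrow> norm (X n - L) < norm L / 2"
    using LIMSEQ_D[OF assms(1), of "norm L / 2"] assms(2) by auto
  define c where "c = min (norm L / 2) (Min (insert 1 (norm ` X ` {..<N})))"
  have "c \<le> norm (X n)" for n
  proof (cases "n \<ge> N")
    case True
    then have "norm L / 2 \<le> norm (X n)"
      using N[of n] norm_triangle_ineq2[of L "X n"] by (simp add: norm_minus_commute)
    then show ?thesis unfolding c_def by linarith
  next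
    case False
    then have "Min (insert 1 (norm ` X ` {..<N})) \<le> norm (X n)" by (intro Min_le) auto
    then show ?thesis unfolding c_def by linarith
  qed
  moreover have "c > 0" unfolding c_def using assms(2,3) by auto
  ultimately show ?thesis by blast
qed

lemma qpoch_bounded_below:
  assumes "norm q < 1" "\<And>j. 1 - z * q ^ j \<noteq> 0"
  shows "\<exists>c>0. \<forall>n. c \<le> norm (qpoch z q n)"
  by (rule LIMSEQ_nonzero_imp_bounded_below[OF qpoch_LIMSEQ[OF assms(1)]
        qpoch_inf_nonzero[OF assms] qpoch_nonzero[OF assms(2)]])

lemma qpoch_shift_bounded_below:
  assumes q: "norm q < 1" and nz: "\<And>j. 1 - z * q ^ j \<noteq> 0"
  shows "\<exists>c>0. \<forall>N m. c \<le> norm (qpoch (z * q ^ N) q m)"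
proof -
  obtain c where c: "c > 0" "\<And>n. c \<le> norm (qpoch z q n)"
    using qpoch_bounded_below[OF q nz] by blast
  define E where "E = exp (norm z / (1 - norm q))"
  have "c / E \<le> norm (qpoch (z * q ^ N) q m)" for N m
  proof -
    have "c \<le> norm (qpoch z q N) * norm (qpoch (z * q ^ N) q m)"
      using c(2)[of "N + m"] by (simp add: qpoch_add norm_mult)
    also have "\<dots> \<le> E * norm (qpoch (z * q ^ N) q m)"
      unfolding E_def by (intro mult_right_mono norm_qpoch_le q) simp
    finally show ?thesis by (simp add: E_def divide_le_eq mult.commute)
  qed
  then show ?thesis using c(1) by (intro exI[of _ "c / E"]) (auto simp: E_def)
qed

lemma qpoch_recurrence_limit:
  assumes q: "norm q < 1"
    and rec: "\<And>N. (1 - u * q ^ N) * T N = (1 - v * q ^ N) * T (Suc N)"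
    and lim: "T \<longlonglongrightarrow> L"
  shows "T 0 * qpoch_inf u q = qpoch_inf v q * L"
proof -
  have iter: "T 0 * qpoch u q N = qpoch v q N * T N" for N
  proof (induction N)
    case (Suc N)
    have "T 0 * qpoch u q (Suc N) = (T 0 * qpoch u q N) * (1 - u * q ^ N)"
      by (simp add: qpoch_Suc mult.assoc)
    also have "\<dots> = qpoch v q N * ((1 - u * q ^ N) * T N)"
      using Suc by (simp add: mult_ac)
    also have "\<dots> = qpoch v q N * ((1 - v * q ^ N) * T (Suc N))"
      by (simp only: rec)
    also have "\<dots> = qpoch v q (Suc N) * T (Suc N)"
      by (simp add: qpoch_Suc mult_ac)
    finally show ?case .
  qed simp
  have "(\<lambda>N. T 0 * qpoch u q N) \<longlonglongrightarrow> T 0 * qpoch_inf u q"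
    by (intro tendsto_intros qpoch_LIMSEQ q)
  moreover have "(\<lambda>N. T 0 * qpoch u q N) \<longlonglongrightarrow> qpoch_inf v q * L"
    unfolding iter by (intro tendsto_intros qpoch_LIMSEQ q lim)
  ultimately show ?thesis by (rule LIMSEQ_unique)
qed

text \<open>qpoch_hom x y q n = x^n (y/x;q)_n, a form that remains meaningful for x = 0.\<close>
definition qpoch_hom :: "complex \<Rightarrow> complex \<Rightarrow> complex \<Rightarrow> nat \<Rightarrow> complex" where
  "qpoch_hom x y q n = (\<Prod>j<n. x - y * q ^ j)"

lemma qpoch_hom_0 [simp]: "qpoch_hom x y q 0 = 1"
  by (simp add: qpoch_hom_def)

lemma qpoch_hom_zero_right [simp]: "qpoch_hom x 0 q n = x ^ n"
  by (simp add: qpoch_hom_def)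

lemma qpoch_hom_Suc: "qpoch_hom x y q (Suc n) = qpoch_hom x y q n * (x - y * q ^ n)"
  by (simp add: qpoch_hom_def)

lemma qpoch_hom_Suc_shift: "qpoch_hom x y q (Suc n) = (x - y) * qpoch_hom x (y * q) q n"
  unfolding qpoch_hom_def by (subst prod.lessThan_Suc_shift) (simp add: mult.assoc)

lemma qpoch_hom_add: "qpoch_hom x y q (m + n) = qpoch_hom x y q m * qpoch_hom x (y * q ^ m) q n"
  by (induction n) (simp_all add: qpoch_hom_Suc power_add mult_ac)

lemma qpoch_hom_scale: "qpoch_hom x (x * b) q n = x ^ n * qpoch b q n"
  by (induction n) (simp_all add: qpoch_hom_Suc qpoch_Suc algebra_simps)

lemma qpoch_hom_zero_triangular: "qpoch_hom 0 (s * q) q n = (-1) ^ n * s ^ n * q ^ (n * (n + 1) div 2)"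
proof (induction n)
  case (Suc n)
  have e: "Suc n * (Suc n + 1) div 2 = n * (n + 1) div 2 + Suc n"
  proof -
    have "Suc n * (Suc n + 1) = n * (n + 1) + 2 * Suc n" by simp
    then show ?thesis by simp
  qed
  show ?case unfolding qpoch_hom_Suc Suc e by (simp add: power_add mult_ac)
qed simp

lemma qpoch_hom_zero_square: "r ^ 2 = q \<Longrightarrow> qpoch_hom 0 (s * r) q n = (-1) ^ n * s ^ n * r ^ (n ^ 2)"
proof (induction n)
  case (Suc n)
  have e: "Suc n ^ 2 = n ^ 2 + (2 * n + 1)" by (simp add: power2_eq_square)
  have "q ^ n = r ^ (2 * n)" using Suc.prems by (simp add: power_mult)
  then show ?case unfolding qpoch_hom_Suc Suc.IH[OF Suc.prems] e by (simp add: power_add mult_ac)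
qed simp

lemma qpoch_hom_q_q2_combination:
  "(1 - B) * qpoch_hom q (q\<^sup>2 * B) q n + B * qpoch_hom (q\<^sup>2) (q\<^sup>2 * B) q n = q ^ n * qpoch B q n"
proof -
  have "qpoch_hom q (q\<^sup>2 * B) q n = q ^ n * qpoch (B * q) q n"
    using qpoch_hom_scale[of q "q * B" q n] by (simp add: power2_eq_square mult_ac)
  moreover have "qpoch_hom (q\<^sup>2) (q\<^sup>2 * B) q n = q ^ n * q ^ n * qpoch B q n"
    unfolding qpoch_hom_scale by (simp add: power_mult_distrib power2_eq_square)
  ultimately have "(1 - B) * qpoch_hom q (q\<^sup>2 * B) q n + B * qpoch_hom (q\<^sup>2) (q\<^sup>2 * B) q n
      = q ^ n * ((1 - B) * qpoch (B * q) q n + B * q ^ n * qpoch B q n)"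
    by (simp add: algebra_simps)
  also have "(1 - B) * qpoch (B * q) q n = qpoch B q n * (1 - B * q ^ n)"
    by (rule qpoch_shift_ratio[symmetric])
  finally show ?thesis by (simp add: algebra_simps)
qed

lemma prod_le_geometric:
  fixes f :: "nat \<Rightarrow> real"
  assumes "\<And>j. 0 \<le> f j" "\<And>j. f j \<le> M * \<theta>" "\<And>j. J \<le> j \<Longrightarrow> f j \<le> \<theta>" "0 < \<theta>" "1 \<le> M"
  shows "(\<Prod>j<m. f j) \<le> M ^ J * \<theta> ^ m"
proof -
  have "(\<Prod>j<m. f j) \<le> M ^ min m J * \<theta> ^ m"
  proof (induction m)
    case (Suc m)
    have "(\<Prod>j<Suc m. f j) \<le> (M ^ min m J * \<theta> ^ m) * f m"
      using Suc assms(1) by (simp add: mult_right_mono)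
    also have "\<dots> \<le> M ^ min (Suc m) J * \<theta> ^ Suc m"
    proof (cases "J \<le> m")
      case True
      then show ?thesis using assms(3)[OF True] assms(4,5) by (simp add: mult_left_mono)
    next
      case False
      then have "(M ^ min m J * \<theta> ^ m) * f m \<le> (M ^ min m J * \<theta> ^ m) * (M * \<theta>)"
        using assms by (intro mult_left_mono) auto
      with False show ?thesis by (simp add: mult_ac)
    qed
    finally show ?case .
  qed simp
  also have "\<dots> \<le> M ^ J * \<theta> ^ m"
    using assms by (intro mult_right_mono power_increasing) auto
  finally show ?thesis .
qed

text \<open>For |x| < 1 the factors x - y q^j are eventually smaller than (1 + |x|)/2, uniformly in bounded y.\<close>
lemma qpoch_hom_bound:
  assumes q: "norm q < 1" and x: "norm x < 1"
  obtains K \<theta> where "0 < \<theta>" "\<theta> < 1" "0 \<le> K"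
    "\<And>m y. norm y \<le> R \<Longrightarrow> norm (qpoch_hom x y q m) \<le> K * \<theta> ^ m"
proof -
  define \<theta> where "\<theta> = (1 + norm x) / 2"
  have \<theta>: "0 < \<theta>" "\<theta> < 1" using x unfolding \<theta>_def by (auto simp: add_pos_nonneg)
  have "(\<lambda>j. \<bar>R\<bar> * norm q ^ j) \<longlonglongrightarrow> \<bar>R\<bar> * 0"
    using q by (intro tendsto_mult tendsto_const LIMSEQ_power_zero) auto
  then obtain J where J: "\<And>j. J \<le> j \<Longrightarrow> \<bar>R\<bar> * norm q ^ j < (1 - norm x) / 2"
    using LIMSEQ_D[of _ 0 "(1 - norm x) / 2"] x by fastforce
  define M where "M = max 1 ((norm x + \<bar>R\<bar>) / \<theta>)"
  define f where "f j = norm x + \<bar>R\<bar> * norm q ^ j" for j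
  have "norm (qpoch_hom x y q m) \<le> M ^ J * \<theta> ^ m" if y: "norm y \<le> R" for m y
  proof -
    have "norm (qpoch_hom x y q m) \<le> (\<Prod>j<m. f j)"
      unfolding qpoch_hom_def prod_norm[symmetric]
    proof (rule prod_mono, safe)
      fix j
      have "norm (x - y * q ^ j) \<le> norm x + norm y * norm q ^ j"
        using norm_triangle_ineq4[of x "y * q ^ j"] by (simp add: norm_mult norm_power)
      also have "\<dots> \<le> f j" unfolding f_def using y by (intro add_left_mono mult_right_mono) auto
      finally show "norm (x - y * q ^ j) \<le> f j" .
    qed simp
    also have "\<dots> \<le> M ^ J * \<theta> ^ m"
    proof (rule prod_le_geometric[OF _ _ _ \<theta>(1)])
      fix j
      have "f j \<le> norm x + \<bar>R\<bar>"
        unfolding f_def using q by (simp add: mult_left_le power_le_one)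
      also have "\<dots> \<le> M * \<theta>" unfolding M_def using \<theta> by (simp add: divide_le_eq max_def)
      finally show "f j \<le> M * \<theta>" .
      show "J \<le> j \<Longrightarrow> f j \<le> \<theta>" using J[of j] unfolding f_def \<theta>_def by simp
    qed (auto simp: f_def M_def)
    finally show ?thesis .
  qed
  then show ?thesis using that[OF \<theta>, of "M ^ J"] by (simp add: M_def)
qed

section \<open>The q-binomial theorem and the q-Gauss sum\<close>

lemma q_binomial_term_bound:
  assumes q: "norm q < 1"
  shows "\<exists>C\<ge>0. \<forall>w m. norm (qpoch \<rho> q m * w ^ m / qpoch q q m) \<le> C * norm w ^ m"
proof -
  obtain c where c: "c > 0" "\<And>n. c \<le> norm (qpoch q q n)"
    using qpoch_bounded_below[OF q qpoch_factor_nonzero[OF q q]] by blast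
  define E where "E = exp (norm \<rho> / (1 - norm q))"
  have "norm (qpoch \<rho> q m * w ^ m / qpoch q q m) \<le> E / c * norm w ^ m" for w m
  proof -
    have "norm (qpoch \<rho> q m) * norm w ^ m \<le> E * norm w ^ m"
      unfolding E_def by (intro mult_right_mono norm_qpoch_le q) simp
    then have "norm (qpoch \<rho> q m * w ^ m / qpoch q q m) \<le> E * norm w ^ m / c"
      unfolding norm_divide norm_mult norm_power
      using c by (intro frac_le) (auto simp: E_def)
    then show ?thesis by simp
  qed
  then show ?thesis using c(1) by (intro exI[of _ "E / c"]) (simp add: E_def)
qed

lemma summable_q_binomial:
  assumes "norm q < 1" "norm w < 1"
  shows "summable (\<lambda>m. qpoch \<rho> q m * w ^ m / qpoch q q m)"
proof -
  obtain C where C: "0 \<le> C" "\<And>w m. norm (qpoch \<rho> q m * w ^ m / qpoch q q m) \<le> C * norm w ^ m"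
    using q_binomial_term_bound[OF assms(1)] by blast
  have "summable (\<lambda>m. C * norm w ^ m)"
    using assms(2) by (intro summable_mult summable_geometric) simp
  then show ?thesis
    by (rule summable_comparison_test'[where N=0]) (use C in simp)
qed

lemma q_binomial_functional_equation:
  assumes q: "norm q < 1" and w: "norm w < 1"
  shows "(1 - w) * (\<Sum>m. qpoch \<rho> q m * w ^ m / qpoch q q m)
       = (1 - w * \<rho>) * (\<Sum>m. qpoch \<rho> q m * (w * q) ^ m / qpoch q q m)"
proof -
  define b where "b v m = qpoch \<rho> q m * v ^ m / qpoch q q m" for v m
  have wq: "norm (w * q) < 1" using norm_mult_power_le[OF q, of w 1] w by simp
  have sb: "summable (b v)" if "norm v < 1" for v
    unfolding b_def by (rule summable_q_binomial[OF q that])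
  have step: "b w (Suc m) - b (w * q) (Suc m) = w * b w m - w * \<rho> * b (w * q) m" for m
  proof -
    have nz: "1 - q * q ^ m \<noteq> 0" "qpoch q q m \<noteq> 0"
      using qpoch_nonzero qpoch_factor_nonzero[OF q q] by blast+
    have "b w (Suc m) - b (w * q) (Suc m) = qpoch \<rho> q (Suc m) * (w ^ Suc m * (1 - q * q ^ m)) / qpoch q q (Suc m)"
      unfolding b_def by (simp add: diff_divide_distrib power_mult_distrib algebra_simps)
    also have "\<dots> = qpoch \<rho> q (Suc m) * w ^ Suc m / qpoch q q m"
      using nz by (simp add: qpoch_Suc[of q q m])
    also have "\<dots> = w * b w m - w * \<rho> * b (w * q) m"
      unfolding b_def qpoch_Suc by (simp add: power_mult_distrib diff_divide_distrib algebra_simps)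
    finally show ?thesis .
  qed
  have tail: "(\<lambda>m. b v (Suc m)) sums (suminf (b v) - 1)" if "norm v < 1" for v
    using sums_Suc_iff[of "b v"] summable_sums[OF sb[OF that]] by (simp add: b_def)
  have "(\<lambda>m. b w (Suc m) - b (w * q) (Suc m)) sums (suminf (b w) - 1 - (suminf (b (w * q)) - 1))"
    by (intro sums_diff tail w wq)
  moreover have "(\<lambda>m. w * b w m - w * \<rho> * b (w * q) m) sums (w * suminf (b w) - w * \<rho> * suminf (b (w * q)))"
    by (intro sums_diff sums_mult summable_sums sb w wq)
  ultimately have "suminf (b w) - 1 - (suminf (b (w * q)) - 1) = w * suminf (b w) - w * \<rho> * suminf (b (w * q))"
    unfolding step by (rule sums_unique2)
  then show ?thesis unfolding b_def by (simp add: algebra_simps)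
qed

theorem q_binomial_sums:
  assumes q: "norm q < 1" and x: "norm x < 1"
  shows "(\<lambda>m. qpoch \<rho> q m * x ^ m / qpoch q q m) sums (qpoch_inf (x * \<rho>) q / qpoch_inf x q)"
proof -
  define b where "b v m = qpoch \<rho> q m * v ^ m / qpoch q q m" for v m
  define T where "T N = suminf (b (x * q ^ N))" for N
  have xq: "norm (x * q ^ N) < 1" for N using norm_mult_power_le[OF q, of x N] x by simp
  have rec: "(1 - x * q ^ N) * T N = (1 - x * \<rho> * q ^ N) * T (Suc N)" for N
    using q_binomial_functional_equation[OF q xq[of N]] unfolding T_def b_def by (simp add: mult_ac)
  have "T \<longlonglongrightarrow> 1"
  proof -
    obtain C where C: "0 \<le> C" "\<And>w m. norm (b w m) \<le> C * norm w ^ m"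
      using q_binomial_term_bound[OF q] unfolding b_def by blast
    have "(\<lambda>n. x * q ^ n) \<longlonglongrightarrow> 0"
      using q by (intro tendsto_mult_right_zero LIMSEQ_power_zero) auto
    then have "(\<lambda>n. b (x * q ^ n) k) \<longlonglongrightarrow> b 0 k" for k
      unfolding b_def using qpoch_nonzero[OF qpoch_factor_nonzero[OF q q]] by (intro tendsto_intros)
    moreover have "norm (b (x * q ^ n) k) \<le> C * norm x ^ k" for k n
      using order.trans[OF C(2) mult_left_mono[OF power_mono[OF norm_mult_power_le[OF q] norm_ge_zero] C(1)]] .
    then have "\<forall>\<^sub>F (k, n) in at_top \<times>\<^sub>F sequentially. norm (b (x * q ^ n) k) \<le> C * norm x ^ k"
      by (intro always_eventually) auto
    moreover have "summable (\<lambda>k. C * norm x ^ k)"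
      using x by (intro summable_mult summable_geometric) auto
    ultimately have "T \<longlonglongrightarrow> suminf (b 0)"
      unfolding T_def using tannerys_theorem[of "\<lambda>k n. b (x * q ^ n) k" "b 0" sequentially] by auto
    moreover have "b 0 = (\<lambda>k. if k = 0 then 1 else 0)"
      by (auto simp: b_def fun_eq_iff)
    then have "b 0 sums 1"
      using sums_single[of 0 "\<lambda>_. 1::complex"] by simp
    ultimately show ?thesis by (simp add: sums_iff)
  qed
  from qpoch_recurrence_limit[OF q rec this]
  have "T 0 * qpoch_inf x q = qpoch_inf (x * \<rho>) q" by simp
  moreover have "qpoch_inf x q \<noteq> 0" by (rule qpoch_inf_nonzero[OF q qpoch_factor_nonzero[OF q x]])
  ultimately have "suminf (b x) = qpoch_inf (x * \<rho>) q / qpoch_inf x q"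
    unfolding T_def by (simp add: field_simps)
  then show ?thesis using summable_q_binomial[OF q x] unfolding b_def by (simp add: sums_iff)
qed

definition q_gauss_term :: "complex \<Rightarrow> complex \<Rightarrow> complex \<Rightarrow> complex \<Rightarrow> nat \<Rightarrow> complex" where
  "q_gauss_term \<rho> x q y m = qpoch \<rho> q m * qpoch_hom x y q m / (qpoch q q m * qpoch (\<rho> * y) q m)"

lemma q_gauss_term_0 [simp]: "q_gauss_term \<rho> x q y 0 = 1"
  by (simp add: q_gauss_term_def)

lemma q_gauss_term_recurrence:
  fixes \<rho> x q y :: complex
  assumes q: "norm q < 1" and nz: "\<And>j. 1 - \<rho> * y * q ^ j \<noteq> 0"
  defines "g \<equiv> q_gauss_term \<rho> x q"
  shows "(1 - \<rho> * y) * g y (Suc m) - (1 - y) * g (y * q) (Suc m)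
       = y * (1 - \<rho> * q ^ Suc m) * g (y * q) (Suc m) - y * (1 - \<rho> * q ^ m) * g (y * q) m"
proof -
  define R P Q C where "R = qpoch \<rho> q m" and "P = qpoch_hom x (y * q) q m"
    and "Q = qpoch q q m" and "C = qpoch (\<rho> * y * q) q m"
  define D1 D2 D3 where "D1 = 1 - q * q ^ m" and "D2 = 1 - \<rho> * y * (q * q ^ m)" and "D3 = 1 - \<rho> * y"
  have nz: "Q \<noteq> 0" "C \<noteq> 0" "D1 \<noteq> 0" "D2 \<noteq> 0" "D3 \<noteq> 0"
    unfolding Q_def C_def D1_def D2_def D3_def
    using qpoch_nonzero[OF qpoch_factor_nonzero[OF q q]] qpoch_factor_nonzero[OF q q]
      qpoch_nonzero[of "\<rho> * y * q" q] nz[of "Suc _"] nz[of "Suc m"] nz[of 0]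
    by (auto simp: mult_ac)
  have e1: "g y (Suc m) = R * (1 - \<rho> * q ^ m) * ((x - y) * P) / ((Q * D1) * (D3 * C))"
    unfolding g_def q_gauss_term_def qpoch_hom_Suc_shift qpoch_Suc_shift[of "\<rho> * y"] R_def P_def Q_def C_def D1_def D3_def
    by (simp add: qpoch_Suc)
  have e2: "g (y * q) (Suc m) = R * (1 - \<rho> * q ^ m) * (P * (x - y * (q * q ^ m))) / ((Q * D1) * (C * D2))"
    unfolding g_def q_gauss_term_def R_def P_def Q_def C_def D1_def D2_def by (simp add: qpoch_Suc qpoch_hom_Suc mult_ac)
  have e3: "g (y * q) m = R * P / (Q * C)"
    unfolding g_def q_gauss_term_def R_def P_def Q_def C_def by (simp add: mult_ac)
  show ?thesis unfolding e1 e2 e3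
    using nz by (simp add: field_simps) (simp add: D1_def D2_def D3_def algebra_simps)
qed

lemma q_gauss_functional_equation:
  assumes q: "norm q < 1" and nz: "\<And>j. 1 - \<rho> * y * q ^ j \<noteq> 0"
    and s1: "summable (q_gauss_term \<rho> x q y)" and s2: "summable (q_gauss_term \<rho> x q (y * q))"
  shows "(1 - \<rho> * y) * suminf (q_gauss_term \<rho> x q y) = (1 - y) * suminf (q_gauss_term \<rho> x q (y * q))"
proof -
  define g where "g = q_gauss_term \<rho> x q"
  define H where "H m = y * (1 - \<rho> * q ^ m) * g (y * q) m" for m
  define D where "D m = (if m = 0 then 0 else H (m - 1))" for m
  have tele: "(1 - \<rho> * y) * g y m - (1 - y) * g (y * q) m = D (Suc m) - D m" for m
  proof (cases m)
    case 0
    then show ?thesis by (simp add: D_def H_def g_def algebra_simps)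
  next
    case (Suc k)
    then show ?thesis
      using q_gauss_term_recurrence[OF q nz, of x k] by (simp add: D_def H_def g_def)
  qed
  have "H \<longlonglongrightarrow> y * (1 - \<rho> * 0) * 0"
    unfolding H_def using q s2 unfolding g_def
    by (intro tendsto_intros LIMSEQ_power_zero summable_LIMSEQ_zero) auto
  then have "(\<lambda>m. D (Suc m)) \<longlonglongrightarrow> 0"
    by (simp add: D_def)
  then have "D \<longlonglongrightarrow> 0" by (rule LIMSEQ_imp_Suc)
  from telescope_sums[OF this]
  have "(\<lambda>m. (1 - \<rho> * y) * g y m - (1 - y) * g (y * q) m) sums 0"
    unfolding tele by (simp add: D_def)
  moreover have "(\<lambda>m. (1 - \<rho> * y) * g y m - (1 - y) * g (y * q) m) sums
      ((1 - \<rho> * y) * suminf (g y) - (1 - y) * suminf (g (y * q)))"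
    using s1 s2 unfolding g_def by (intro sums_diff sums_mult summable_sums)
  ultimately have "0 = (1 - \<rho> * y) * suminf (g y) - (1 - y) * suminf (g (y * q))"
    by (rule sums_unique2)
  then show ?thesis unfolding g_def by simp
qed

lemma q_gauss_term_bound:
  assumes q: "norm q < 1" and x: "norm x < 1" and nz: "\<And>j. 1 - \<rho> * y * q ^ j \<noteq> 0"
  shows "\<exists>C \<theta>. 0 < \<theta> \<and> \<theta> < 1 \<and> (\<forall>N m. norm (q_gauss_term \<rho> x q (y * q ^ N) m) \<le> C * \<theta> ^ m)"
proof -
  obtain c1 where c1: "c1 > 0" "\<And>n. c1 \<le> norm (qpoch q q n)"
    using qpoch_bounded_below[OF q qpoch_factor_nonzero[OF q q]] by blast
  obtain c2 where c2: "c2 > 0" "\<And>N m. c2 \<le> norm (qpoch (\<rho> * y * q ^ N) q m)"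
    using qpoch_shift_bounded_below[OF q nz] by blast
  obtain K \<theta> where K: "0 < \<theta>" "\<theta> < 1" "0 \<le> K"
     "\<And>m w. norm w \<le> norm y \<Longrightarrow> norm (qpoch_hom x w q m) \<le> K * \<theta> ^ m"
    using qpoch_hom_bound[OF q x] by metis
  define E where "E = exp (norm \<rho> / (1 - norm q))"
  have "norm (q_gauss_term \<rho> x q (y * q ^ N) m) \<le> E * K / (c1 * c2) * \<theta> ^ m" for N m
  proof -
    have "norm (qpoch \<rho> q m) * norm (qpoch_hom x (y * q ^ N) q m) \<le> E * (K * \<theta> ^ m)"
      unfolding E_def
      by (intro mult_mono norm_qpoch_le q K(4) norm_mult_power_le) (use K in auto)
    moreover have "c1 * c2 \<le> norm (qpoch q q m) * norm (qpoch (\<rho> * (y * q ^ N)) q m)"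
      using c1 c2(1) c2(2)[of N m] by (intro mult_mono) (auto simp: mult_ac)
    ultimately have "norm (qpoch \<rho> q m) * norm (qpoch_hom x (y * q ^ N) q m) /
        (norm (qpoch q q m) * norm (qpoch (\<rho> * (y * q ^ N)) q m)) \<le> E * (K * \<theta> ^ m) / (c1 * c2)"
      using c1(1) c2(1) K(1,3) by (intro frac_le) (auto simp: E_def)
    then show ?thesis unfolding q_gauss_term_def norm_divide norm_mult by simp
  qed
  then show ?thesis using K(1,2) by blast
qed

text \<open>The functional equation is iterated along y q^N; the limit y q^N -> 0 is the q-binomial sum.\<close>
theorem q_gauss_sums:
  assumes q: "norm q < 1" and x: "norm x < 1" and nz: "\<And>j. 1 - \<rho> * y * q ^ j \<noteq> 0"
  shows "q_gauss_term \<rho> x q y sums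
           (qpoch_inf y q * qpoch_inf (x * \<rho>) q / (qpoch_inf (\<rho> * y) q * qpoch_inf x q))"
proof -
  define g where "g = q_gauss_term \<rho> x q"
  define T where "T N = suminf (g (y * q ^ N))" for N
  obtain C \<theta> where C: "0 < \<theta>" "\<theta> < 1" "\<And>N m. norm (g (y * q ^ N) m) \<le> C * \<theta> ^ m"
    using q_gauss_term_bound[OF q x nz] unfolding g_def by blast
  have summ: "summable (\<lambda>m. C * \<theta> ^ m)" using C(1,2) by (intro summable_mult summable_geometric) auto
  have sg: "summable (g (y * q ^ N))" for N
    by (rule summable_comparison_test'[OF summ]) (use C(3) in simp)
  have rec: "(1 - \<rho> * y * q ^ N) * T N = (1 - y * q ^ N) * T (Suc N)" for N
  proof -
    have "1 - \<rho> * (y * q ^ N) * q ^ j \<noteq> 0" for j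
      using nz[of "N + j"] by (simp add: power_add mult_ac)
    moreover have "summable (g (y * q ^ N * q))" using sg[of "Suc N"] by (simp add: mult_ac)
    ultimately show ?thesis
      using q_gauss_functional_equation[OF q _ sg[of N, unfolded g_def]]
      unfolding T_def g_def by (simp add: mult_ac)
  qed
  have "T \<longlonglongrightarrow> qpoch_inf (x * \<rho>) q / qpoch_inf x q"
  proof -
    have "(\<lambda>n. y * q ^ n) \<longlonglongrightarrow> 0"
      using q by (intro tendsto_mult_right_zero LIMSEQ_power_zero) auto
    then have "(\<lambda>n. g (y * q ^ n) k) \<longlonglongrightarrow> g 0 k" for k
      unfolding g_def q_gauss_term_def qpoch_def qpoch_hom_def
      using qpoch_nonzero[OF qpoch_factor_nonzero[OF q q], of k] unfolding qpoch_def
      by (intro tendsto_intros) auto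
    moreover have "\<forall>\<^sub>F (k, n) in at_top \<times>\<^sub>F sequentially. norm (g (y * q ^ n) k) \<le> C * \<theta> ^ k"
      using C(3) by (intro always_eventually) auto
    ultimately have "T \<longlonglongrightarrow> suminf (g 0)"
      unfolding T_def using summ tannerys_theorem[of "\<lambda>k n. g (y * q ^ n) k" "g 0" sequentially] by auto
    moreover have "g 0 = (\<lambda>m. qpoch \<rho> q m * x ^ m / qpoch q q m)"
      by (simp add: g_def q_gauss_term_def fun_eq_iff)
    ultimately show ?thesis using sums_unique[OF q_binomial_sums[OF q x, of \<rho>]] by simp
  qed
  from qpoch_recurrence_limit[OF q rec this]
  have "T 0 * qpoch_inf (\<rho> * y) q = qpoch_inf y q * (qpoch_inf (x * \<rho>) q / qpoch_inf x q)" .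
  moreover have "qpoch_inf (\<rho> * y) q \<noteq> 0" "qpoch_inf x q \<noteq> 0"
    using qpoch_inf_nonzero[OF q nz] qpoch_inf_nonzero[OF q qpoch_factor_nonzero[OF q x]] by auto
  ultimately have "suminf (g y) = qpoch_inf y q * qpoch_inf (x * \<rho>) q / (qpoch_inf (\<rho> * y) q * qpoch_inf x q)"
    unfolding T_def by (simp add: field_simps)
  then show ?thesis using sg[of 0] unfolding g_def by (simp add: sums_iff)
qed

lemma sum_triangle_swap:
  fixes f :: "nat \<Rightarrow> nat \<Rightarrow> 'a :: comm_monoid_add"
  shows "(\<Sum>n\<le>N. \<Sum>k\<le>n. f k (n - k)) = (\<Sum>k\<le>N. \<Sum>m\<le>N - k. f k m)"
proof -
  have "{(k, m). k + m \<le> N} = Sigma {..N} (\<lambda>k. {..N - k})" by auto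
  then show ?thesis
    using sum.triangle_reindex_eq[of "\<lambda>k m. f k m" N] by (simp add: sum.Sigma)
qed

lemma norm_sums_tail_le_geometric:
  fixes f :: "nat \<Rightarrow> 'a :: banach"
  assumes f: "f sums s" and bound: "\<And>m. norm (f m) \<le> B * \<theta> ^ m" and \<theta>: "0 \<le> \<theta>" "\<theta> < 1"
  shows "norm (s - (\<Sum>m\<le>n. f m)) \<le> B * \<theta> ^ n / (1 - \<theta>)"
proof -
  have tail: "(\<lambda>i. f (i + Suc n)) sums (s - (\<Sum>m\<le>n. f m))"
    using sums_split_initial_segment[OF f, of "Suc n"] by (simp add: lessThan_Suc_atMost)
  have geom: "(\<lambda>i. B * \<theta> ^ Suc n * \<theta> ^ i) sums (B * \<theta> ^ Suc n / (1 - \<theta>))"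
    using \<theta> sums_mult[OF geometric_sums, of \<theta> "B * \<theta> ^ Suc n"] by (simp add: field_simps)
  have "norm (f (i + Suc n)) \<le> B * \<theta> ^ Suc n * \<theta> ^ i" for i
    using bound[of "i + Suc n"] by (simp add: power_add mult_ac)
  then have "norm (\<Sum>i. f (i + Suc n)) \<le> (\<Sum>i. B * \<theta> ^ Suc n * \<theta> ^ i)"
    by (rule norm_suminf_le) (use geom in \<open>simp add: sums_iff\<close>)
  then have "norm (s - (\<Sum>m\<le>n. f m)) \<le> B * \<theta> ^ Suc n / (1 - \<theta>)"
    using sums_unique[OF tail] sums_unique[OF geom] by simp
  also have "\<dots> \<le> B * \<theta> ^ n / (1 - \<theta>)"
    using order.trans[OF norm_ge_zero bound[of 0]] \<theta>
    by (intro divide_right_mono mult_left_mono power_decreasing) auto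
  finally show ?thesis .
qed

lemma convolution_geometric_LIMSEQ_zero:
  fixes u :: "nat \<Rightarrow> 'a :: real_normed_vector"
  assumes u: "u \<longlonglongrightarrow> 0" and \<theta>: "0 \<le> \<theta>" "\<theta> < 1"
  shows "(\<lambda>N. \<Sum>k\<le>N. \<theta> ^ (N - k) * norm (u k)) \<longlonglongrightarrow> 0"
proof -
  obtain U where U: "\<And>n. norm (u n) \<le> U"
    using convergent_imp_Bseq[of u] u by (auto simp: Bseq_def convergent_def)
  define a where "a j N = (if j \<le> N then \<theta> ^ j * norm (u (N - j)) else 0)" for j N
  have "(\<Sum>k\<le>N. \<theta> ^ (N - k) * norm (u k)) = (\<Sum>j\<le>N. a j N)" for N
    by (rule sum.reindex_bij_witness[where i="\<lambda>j. N - j" and j="\<lambda>k. N - k"]) (auto simp: a_def)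
  also have "(\<Sum>j\<le>N. a j N) = suminf (\<lambda>j. a j N)" for N
    by (rule suminf_finite[symmetric]) (auto simp: a_def)
  finally have eq: "(\<Sum>k\<le>N. \<theta> ^ (N - k) * norm (u k)) = suminf (\<lambda>j. a j N)" for N .
  have lim: "(\<lambda>N. a j N) \<longlonglongrightarrow> 0" for j
  proof -
    have "(\<lambda>n. \<theta> ^ j * norm (u n)) \<longlonglongrightarrow> \<theta> ^ j * 0"
      by (intro tendsto_intros tendsto_norm_zero u)
    then have "(\<lambda>n. a j (n + j)) \<longlonglongrightarrow> 0" by (simp add: a_def)
    then show ?thesis by (rule LIMSEQ_offset)
  qed
  have "norm (a j N) \<le> U * \<theta> ^ j" for j N
  proof -
    have "0 \<le> U" using U[of 0] norm_ge_zero order.trans by blast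
    then show ?thesis
      using mult_right_mono[OF U[of "N - j"], of "\<theta> ^ j"] \<theta> by (simp add: a_def mult.commute)
  qed
  then have bound: "\<forall>\<^sub>F (j, N) in at_top \<times>\<^sub>F sequentially. norm (a j N) \<le> U * \<theta> ^ j"
    by (intro always_eventually) auto
  have "summable (\<lambda>j. U * \<theta> ^ j)" using \<theta> by (intro summable_mult summable_geometric) auto
  from tannerys_theorem[OF lim bound this]
  have "(\<lambda>N. suminf (\<lambda>j. a j N)) \<longlonglongrightarrow> 0" by simp
  then show ?thesis unfolding eq by simp
qed

lemma sums_triangular_interchange:
  fixes \<alpha> \<beta> \<delta> \<gamma> :: "nat \<Rightarrow> 'a :: {banach, real_normed_field}" and M :: "nat \<Rightarrow> nat \<Rightarrow> 'a"
  assumes \<beta>: "\<And>n. \<beta> n = (\<Sum>k\<le>n. \<alpha> k * M n k)"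
    and column: "\<And>k. (\<lambda>m. \<delta> (k + m) * M (k + m) k) sums \<gamma> k"
    and bound: "\<And>k m. norm (\<delta> (k + m) * M (k + m) k) \<le> C * \<theta> ^ m * norm (\<gamma> k)"
    and \<theta>: "0 \<le> \<theta>" "\<theta> < 1" and C: "0 \<le> C"
    and summable: "summable (\<lambda>k. \<alpha> k * \<gamma> k)"
  shows "(\<lambda>n. \<delta> n * \<beta> n) sums (\<Sum>k. \<alpha> k * \<gamma> k)"
proof -
  define R where "R N k = \<gamma> k - (\<Sum>m\<le>N - k. \<delta> (k + m) * M (k + m) k)" for N k
  have partial: "(\<Sum>n\<le>N. \<delta> n * \<beta> n) = (\<Sum>k\<le>N. \<alpha> k * \<gamma> k) - (\<Sum>k\<le>N. \<alpha> k * R N k)" for N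
  proof -
    have "(\<Sum>n\<le>N. \<delta> n * \<beta> n) = (\<Sum>n\<le>N. \<Sum>k\<le>n. \<alpha> k * (\<delta> (k + (n - k)) * M (k + (n - k)) k))"
      unfolding \<beta> sum_distrib_left by (intro sum.cong) (auto simp: mult_ac)
    also have "\<dots> = (\<Sum>k\<le>N. \<Sum>m\<le>N - k. \<alpha> k * (\<delta> (k + m) * M (k + m) k))"
      by (rule sum_triangle_swap)
    also have "\<dots> = (\<Sum>k\<le>N. \<alpha> k * (\<Sum>m\<le>N - k. \<delta> (k + m) * M (k + m) k))"
      by (simp add: sum_distrib_left)
    finally show ?thesis by (simp add: R_def right_diff_distrib sum_subtractf)
  qed
  have R: "norm (R N k) \<le> C / (1 - \<theta>) * (\<theta> ^ (N - k) * norm (\<gamma> k))" for N k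
    using norm_sums_tail_le_geometric[OF column, where B="C * norm (\<gamma> k)" and \<theta>=\<theta> and n="N - k"] bound \<theta>
    unfolding R_def by (simp add: mult_ac)
  have "(\<lambda>N. \<Sum>k\<le>N. \<alpha> k * R N k) \<longlonglongrightarrow> 0"
  proof (rule Lim_null_comparison)
    have "(\<lambda>N. C / (1 - \<theta>) * (\<Sum>k\<le>N. \<theta> ^ (N - k) * norm (\<alpha> k * \<gamma> k))) \<longlonglongrightarrow> C / (1 - \<theta>) * 0"
      using summable_LIMSEQ_zero[OF summable] \<theta>
      by (intro tendsto_mult tendsto_const convolution_geometric_LIMSEQ_zero)
    then show "(\<lambda>N. C / (1 - \<theta>) * (\<Sum>k\<le>N. \<theta> ^ (N - k) * norm (\<alpha> k * \<gamma> k))) \<longlonglongrightarrow> 0" by simp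
    show "\<forall>\<^sub>F N in sequentially. norm (\<Sum>k\<le>N. \<alpha> k * R N k)
        \<le> C / (1 - \<theta>) * (\<Sum>k\<le>N. \<theta> ^ (N - k) * norm (\<alpha> k * \<gamma> k))"
    proof (intro always_eventually allI order.trans[OF norm_sum])
      fix N
      have "norm (\<alpha> k * R N k) \<le> C / (1 - \<theta>) * (\<theta> ^ (N - k) * norm (\<alpha> k * \<gamma> k))" for k
        using mult_left_mono[OF R[of N k] norm_ge_zero[of "\<alpha> k"]] by (simp add: norm_mult mult_ac)
      then show "(\<Sum>k\<le>N. norm (\<alpha> k * R N k)) \<le> C / (1 - \<theta>) * (\<Sum>k\<le>N. \<theta> ^ (N - k) * norm (\<alpha> k * \<gamma> k))"
        unfolding sum_distrib_left by (rule sum_mono)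
    qed
  qed
  then have "(\<lambda>N. \<Sum>n\<le>N. \<delta> n * \<beta> n) \<longlonglongrightarrow> (\<Sum>k. \<alpha> k * \<gamma> k) - 0"
    unfolding partial by (intro tendsto_diff summable_LIMSEQ' summable)
  then show ?thesis unfolding sums_def_le by simp
qed

lemma summable_power_mult_divide:
  fixes g N :: "nat \<Rightarrow> 'a :: {real_normed_field, banach}"
  assumes g: "summable g" and N: "N \<longlonglongrightarrow> 1" and q: "norm q < 1"
  shows "summable (\<lambda>k. q ^ k * g k / N k)"
proof -
  obtain G where G: "\<And>k. norm (g k) \<le> G"
    using summable_LIMSEQ_zero[OF g] by (metis Bseq_def convergent_def convergent_imp_Bseq)
  have G0: "0 \<le> G" using order.trans[OF norm_ge_zero G] .
  have "\<forall>\<^sub>F k in sequentially. 1 / 2 < norm (N k)"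
    using tendsto_norm[OF N] by (rule order_tendstoD) simp
  then have "\<forall>\<^sub>F k in sequentially. norm (q ^ k * g k / N k) \<le> 2 * G * norm q ^ k"
  proof (rule eventually_mono)
    fix k assume "1 / 2 < norm (N k)"
    moreover have "norm (q ^ k) * norm (g k) \<le> norm q ^ k * G"
      by (simp add: norm_power mult_left_mono G)
    ultimately have "norm (q ^ k) * norm (g k) / norm (N k) \<le> norm q ^ k * G / (1 / 2)"
      using G0 by (intro frac_le) auto
    then show "norm (q ^ k * g k / N k) \<le> 2 * G * norm q ^ k"
      by (simp add: norm_mult norm_divide mult_ac)
  qed
  moreover have "summable (\<lambda>k. 2 * G * norm q ^ k)"
    using q by (intro summable_mult summable_geometric) simp
  ultimately show ?thesis by (rule summable_comparison_test_ev)
qed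

section \<open>A limiting form of Bailey's lemma\<close>

definition bailey_weight :: "complex \<Rightarrow> complex \<Rightarrow> complex \<Rightarrow> complex \<Rightarrow> complex \<Rightarrow> nat \<Rightarrow> complex" where
  "bailey_weight a q \<rho> x y k =
     qpoch_inf y q * qpoch_inf (x * \<rho>) q / (qpoch_inf (a * q) q * qpoch_inf x q) *
     (qpoch \<rho> q k * qpoch_hom x y q k / (qpoch y q k * qpoch (x * \<rho>) q k))"

lemma bailey_column_sums:
  assumes q: "norm q < 1" and x: "norm x < 1" and \<rho>y: "\<rho> * y = a * q"
    and anz: "\<And>j. 1 - a * q * q ^ j \<noteq> 0" and ynz: "\<And>j. 1 - y * q ^ j \<noteq> 0"
    and x\<rho>nz: "\<And>j. 1 - x * \<rho> * q ^ j \<noteq> 0"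
  shows "(\<lambda>m. qpoch \<rho> q (k + m) * qpoch_hom x y q (k + m) / (qpoch q q m * qpoch (a * q) q (2 * k + m)))
     sums bailey_weight a q \<rho> x y k"
proof -
  have shift: "\<rho> * q ^ k * (y * q ^ k) = a * q * q ^ (2 * k)"
    by (simp add: \<rho>y[symmetric] power_add mult_2 mult_2_right mult_ac)
  have "1 - \<rho> * q ^ k * (y * q ^ k) * q ^ j \<noteq> 0" for j
    using anz[of "2 * k + j"] unfolding shift by (simp add: power_add mult_ac)
  note gauss = sums_mult[OF q_gauss_sums[OF q x this], of "qpoch \<rho> q k * qpoch_hom x y q k / qpoch (a * q) q (2 * k)"]
  have nz: "qpoch (a * q) q (2 * k) \<noteq> 0" "qpoch y q k \<noteq> 0" "qpoch (x * \<rho>) q k \<noteq> 0"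
    using qpoch_nonzero anz ynz x\<rho>nz by (auto simp: mult_ac)
  have "qpoch \<rho> q k * qpoch_hom x y q k / qpoch (a * q) q (2 * k) * q_gauss_term (\<rho> * q ^ k) x q (y * q ^ k) m
      = qpoch \<rho> q (k + m) * qpoch_hom x y q (k + m) / (qpoch q q m * qpoch (a * q) q (2 * k + m))" for m
    unfolding q_gauss_term_def qpoch_add qpoch_hom_add shift by (simp add: mult_ac)
  moreover have "qpoch \<rho> q k * qpoch_hom x y q k / qpoch (a * q) q (2 * k) *
      (qpoch_inf (y * q ^ k) q * qpoch_inf (x * (\<rho> * q ^ k)) q / (qpoch_inf (\<rho> * q ^ k * (y * q ^ k)) q * qpoch_inf x q))
    = bailey_weight a q \<rho> x y k"
    unfolding bailey_weight_def shift qpoch_inf_split[OF q, of "a * q" "2 * k"] qpoch_inf_split[OF q, of y k]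
      qpoch_inf_split[OF q, of "x * \<rho>" k]
    using nz by (simp add: mult_ac)
  ultimately show ?thesis using gauss by simp
qed

lemma bailey_column_bound:
  assumes q: "norm q < 1" and x: "norm x < 1"
    and anz: "\<And>j. 1 - a * q * q ^ j \<noteq> 0" and ynz: "\<And>j. 1 - y * q ^ j \<noteq> 0"
    and x\<rho>nz: "\<And>j. 1 - x * \<rho> * q ^ j \<noteq> 0"
  shows "\<exists>C \<theta>. 0 \<le> C \<and> 0 \<le> \<theta> \<and> \<theta> < 1 \<and> (\<forall>k m.
    norm (qpoch \<rho> q (k + m) * qpoch_hom x y q (k + m) / (qpoch q q m * qpoch (a * q) q (2 * k + m)))
      \<le> C * \<theta> ^ m * norm (qpoch \<rho> q k * qpoch_hom x y q k / (qpoch y q k * qpoch (x * \<rho>) q k)))"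
proof -
  obtain c1 where c1: "c1 > 0" "\<And>n. c1 \<le> norm (qpoch q q n)"
    using qpoch_bounded_below[OF q qpoch_factor_nonzero[OF q q]] by blast
  obtain c2 where c2: "c2 > 0" "\<And>n. c2 \<le> norm (qpoch (a * q) q n)"
    using qpoch_bounded_below[OF q anz] by blast
  obtain K \<theta> where K: "0 < \<theta>" "\<theta> < 1" "0 \<le> K"
     "\<And>m w. norm w \<le> norm y \<Longrightarrow> norm (qpoch_hom x w q m) \<le> K * \<theta> ^ m"
    using qpoch_hom_bound[OF q x] by metis
  define E :: "complex \<Rightarrow> real" where "E z = exp (norm z / (1 - norm q))" for z
  have E: "norm (qpoch z q n) \<le> E z" "0 < E z" for z n
    unfolding E_def by (auto intro: norm_qpoch_le q)
  define C where "C = E y * E (x * \<rho>) * E \<rho> * K / (c1 * c2)"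
  have "norm (qpoch \<rho> q (k + m) * qpoch_hom x y q (k + m) / (qpoch q q m * qpoch (a * q) q (2 * k + m)))
      \<le> C * \<theta> ^ m * norm (qpoch \<rho> q k * qpoch_hom x y q k / (qpoch y q k * qpoch (x * \<rho>) q k))" for k m
  proof -
    define h where "h = qpoch \<rho> q k * qpoch_hom x y q k / (qpoch y q k * qpoch (x * \<rho>) q k)"
    define Y where "Y = qpoch y q k * qpoch (x * \<rho>) q k"
    define R where "R = qpoch (\<rho> * q ^ k) q m * qpoch_hom x (y * q ^ k) q m"
    define N where "N = qpoch q q m * qpoch (a * q) q (2 * k + m)"
    have "Y \<noteq> 0" unfolding Y_def using qpoch_nonzero ynz x\<rho>nz by simp
    then have "qpoch \<rho> q (k + m) * qpoch_hom x y q (k + m) = h * Y * R"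
      unfolding h_def Y_def R_def qpoch_add qpoch_hom_add by (simp add: mult_ac)
    then have "norm (qpoch \<rho> q (k + m) * qpoch_hom x y q (k + m) / N) = norm h * norm Y * norm R / norm N"
      unfolding norm_divide by (simp add: norm_mult)
    also have "\<dots> \<le> norm h * (E y * E (x * \<rho>)) * (E \<rho> * (K * \<theta> ^ m)) / (c1 * c2)"
    proof (rule frac_le)
      have "norm Y \<le> E y * E (x * \<rho>)"
        unfolding Y_def norm_mult using E by (intro mult_mono) (auto intro: less_imp_le)
      moreover have "norm R \<le> E \<rho> * (K * \<theta> ^ m)"
      proof -
        have "E (\<rho> * q ^ k) \<le> E \<rho>"
          unfolding E_def using norm_mult_power_le[OF q, of \<rho> k] q by (intro exp_mono divide_right_mono) auto
        then show ?thesis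
          unfolding R_def norm_mult using E K(4)[OF norm_mult_power_le[OF q]]
          by (intro mult_mono) (auto intro: order.trans less_imp_le)
      qed
      ultimately show "norm h * norm Y * norm R \<le> norm h * (E y * E (x * \<rho>)) * (E \<rho> * (K * \<theta> ^ m))"
        using E(2)[of y] E(2)[of "x * \<rho>"] K by (intro mult_mono mult_left_mono) (auto intro: less_imp_le)
      show "c1 * c2 \<le> norm N"
        unfolding N_def norm_mult using c1 c2 by (intro mult_mono) auto
    qed (use c1 c2 E(2)[of y] E(2)[of "x * \<rho>"] E(2)[of \<rho>] K in \<open>auto intro: less_imp_le\<close>)
    finally have "norm (qpoch \<rho> q (k + m) * qpoch_hom x y q (k + m) / N)
        \<le> norm h * (E y * E (x * \<rho>)) * (E \<rho> * (K * \<theta> ^ m)) / (c1 * c2)" .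
    then show ?thesis unfolding C_def h_def N_def by (simp add: mult_ac)
  qed
  moreover have "0 \<le> C"
    unfolding C_def using c1(1) c2(1) E(2) K(3) by (simp add: less_imp_le)
  ultimately show ?thesis using K(1,2) less_imp_le by blast
qed

theorem bailey_lemma_sums:
  assumes q: "norm q < 1" and x: "norm x < 1" and \<rho>y: "\<rho> * y = a * q"
    and anz: "\<And>j. 1 - a * q * q ^ j \<noteq> 0" and ynz: "\<And>j. 1 - y * q ^ j \<noteq> 0"
    and x\<rho>nz: "\<And>j. 1 - x * \<rho> * q ^ j \<noteq> 0"
    and bp: "bailey_pair \<alpha> \<beta> a q"
    and summable: "summable (\<lambda>k. \<alpha> k * bailey_weight a q \<rho> x y k)"
  shows "(\<lambda>n. qpoch \<rho> q n * qpoch_hom x y q n * \<beta> n) sums (\<Sum>k. \<alpha> k * bailey_weight a q \<rho> x y k)"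
proof -
  define c where "c = qpoch_inf y q * qpoch_inf (x * \<rho>) q / (qpoch_inf (a * q) q * qpoch_inf x q)"
  define M where "M n k = 1 / (qpoch q q (n - k) * qpoch (a * q) q (n + k))" for n k
  have c: "c \<noteq> 0"
    unfolding c_def using qpoch_inf_nonzero[OF q] ynz x\<rho>nz anz qpoch_factor_nonzero[OF q x] by simp
  have \<beta>: "\<beta> n = (\<Sum>k\<le>n. \<alpha> k * M n k)" for n
    using bp unfolding bailey_pair_def M_def by simp
  have column: "(\<lambda>m. qpoch \<rho> q (k + m) * qpoch_hom x y q (k + m) * M (k + m) k) sums bailey_weight a q \<rho> x y k" for k
    using bailey_column_sums[OF q x \<rho>y anz ynz x\<rho>nz, of k] unfolding M_def by (simp add: mult_2 add_ac)
  obtain C \<theta> where C: "0 \<le> C" "0 \<le> \<theta>" "\<theta> < 1"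
    "\<And>k m. norm (qpoch \<rho> q (k + m) * qpoch_hom x y q (k + m) * M (k + m) k)
      \<le> C * \<theta> ^ m * norm (qpoch \<rho> q k * qpoch_hom x y q k / (qpoch y q k * qpoch (x * \<rho>) q k))"
    using bailey_column_bound[OF q x anz ynz x\<rho>nz] unfolding M_def by (auto simp: mult_2 add_ac)
  have "norm (qpoch \<rho> q (k + m) * qpoch_hom x y q (k + m) * M (k + m) k)
      \<le> C / norm c * \<theta> ^ m * norm (bailey_weight a q \<rho> x y k)" for k m
    using C(4)[of k m] c unfolding bailey_weight_def c_def[symmetric] by (simp add: norm_mult norm_divide)
  from sums_triangular_interchange[OF \<beta> column this C(2,3) _ summable] C(1)
  show ?thesis by simp
qed

section \<open>The seven identities\<close>

lemma bailey_pair_sum_sqrt_a: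
  fixes a q s :: complex and \<alpha> \<beta> :: "nat \<Rightarrow> complex"
  assumes q: "norm q < 1" and hs: "s ^ 2 = a" and bp: "bailey_pair \<alpha> \<beta> a q"
    and anz: "\<forall>j\<ge>1. a * q ^ j \<noteq> 1"
    and snz: "\<forall>n. 1 - s * q ^ n \<noteq> 0"
    and summable: "summable (\<lambda>n. (1 - s) * (-1) ^ n * s ^ n * q ^ (n * (n + 1) div 2) * \<alpha> n / (1 - s * q ^ n))"
  shows "(\<Sum>n. qpoch s q n * (-1) ^ n * s ^ n * q ^ (n * (n + 1) div 2) * \<beta> n)
         = qpoch_inf (s * q) q / qpoch_inf (a * q) q *
           (\<Sum>n. (1 - s) * (-1) ^ n * s ^ n * q ^ (n * (n + 1) div 2) * \<alpha> n / (1 - s * q ^ n))"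
proof -
  define K where "K = qpoch_inf (s * q) q / qpoch_inf (a * q) q"
  define f where "f n = (1 - s) * (-1) ^ n * s ^ n * q ^ (n * (n + 1) div 2) * \<alpha> n / (1 - s * q ^ n)" for n
  have anz': "1 - a * q * q ^ j \<noteq> 0" for j using anz[rule_format, of "Suc j"] by (auto simp: mult_ac)
  have ynz: "1 - s * q * q ^ j \<noteq> 0" for j using snz[rule_format, of "Suc j"] by (simp add: mult_ac)
  have \<rho>y: "s * (s * q) = a * q" using hs by (simp add: power2_eq_square mult_ac)
  have weight: "\<alpha> k * bailey_weight a q s 0 (s * q) k = K * f k" for k
  proof -
    have ks: "qpoch s q k = (1 - s) * qpoch (s * q) q k / (1 - s * q ^ k)"
      using qpoch_shift_ratio[of s q k] snz by (simp add: eq_divide_eq)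
    show ?thesis
      unfolding bailey_weight_def K_def f_def qpoch_hom_zero_triangular ks
      using qpoch_nonzero[OF ynz, of k] snz[rule_format, of k] qpoch_inf_nonzero[OF q anz']
      by (simp add: field_simps)
  qed
  have weight_summable: "summable (\<lambda>k. \<alpha> k * bailey_weight a q s 0 (s * q) k)"
    unfolding weight by (rule summable_mult[OF summable[folded f_def]])
  have "(\<lambda>n. qpoch s q n * qpoch_hom 0 (s * q) q n * \<beta> n) sums (\<Sum>k. K * f k)"
    unfolding weight[symmetric] by (rule bailey_lemma_sums[OF q _ \<rho>y anz' ynz _ bp weight_summable]) simp_all
  then show ?thesis
    unfolding qpoch_hom_zero_triangular suminf_mult[OF summable[folded f_def]]
    by (simp add: K_def f_def[abs_def] sums_iff mult_ac)
qed

lemma bailey_pair_sum_sqrt_aq: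
  fixes a q s r :: complex and \<alpha> \<beta> :: "nat \<Rightarrow> complex"
  assumes q: "norm q < 1" and hs: "s ^ 2 = a" and hr: "r ^ 2 = q" and bp: "bailey_pair \<alpha> \<beta> a q"
    and anz: "\<forall>j\<ge>1. a * q ^ j \<noteq> 1"
    and summable: "summable (\<lambda>n. (-1) ^ n * s ^ n * r ^ (n\<^sup>2) * \<alpha> n)"
  shows "(\<Sum>n. qpoch (s * r) q n * (-1) ^ n * s ^ n * r ^ (n\<^sup>2) * \<beta> n)
         = qpoch_inf (s * r) q / qpoch_inf (a * q) q *
           (\<Sum>n. (-1) ^ n * s ^ n * r ^ (n\<^sup>2) * \<alpha> n)"
proof -
  define K where "K = qpoch_inf (s * r) q / qpoch_inf (a * q) q"
  define f where "f n = (-1) ^ n * s ^ n * r ^ (n\<^sup>2) * \<alpha> n" for n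
  have anz': "1 - a * q * q ^ j \<noteq> 0" for j using anz[rule_format, of "Suc j"] by (auto simp: mult_ac)
  have ynz: "1 - s * r * q ^ j \<noteq> 0" for j
  proof
    assume "1 - s * r * q ^ j = 0"
    then have "(s * r * q ^ j) ^ 2 = 1" by simp
    moreover have "(s * r * q ^ j) ^ 2 = a * q ^ (2 * j + 1)"
      using hs hr by (simp add: power_mult_distrib power_add power_mult mult_ac)
    ultimately show False using anz[rule_format, of "2 * j + 1"] by simp
  qed
  have \<rho>y: "s * r * (s * r) = a * q" using hs hr by (simp add: power2_eq_square mult_ac)
  have weight: "\<alpha> k * bailey_weight a q (s * r) 0 (s * r) k = K * f k" for k
    unfolding bailey_weight_def K_def f_def qpoch_hom_zero_square[OF hr]
    using qpoch_nonzero[OF ynz, of k] by (simp add: field_simps)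
  have weight_summable: "summable (\<lambda>k. \<alpha> k * bailey_weight a q (s * r) 0 (s * r) k)"
    unfolding weight by (rule summable_mult[OF summable[folded f_def]])
  have "(\<lambda>n. qpoch (s * r) q n * qpoch_hom 0 (s * r) q n * \<beta> n) sums (\<Sum>k. K * f k)"
    unfolding weight[symmetric] by (rule bailey_lemma_sums[OF q _ \<rho>y anz' ynz _ bp weight_summable]) simp_all
  then show ?thesis
    unfolding qpoch_hom_zero_square[OF hr] suminf_mult[OF summable[folded f_def]]
    by (simp add: K_def f_def[abs_def] sums_iff mult_ac)
qed

lemma bailey_weight_q2:
  assumes q: "norm q < 1" and anz: "\<And>j. 1 - a * q * q ^ j \<noteq> 0"
    and A: "\<And>n. 1 - A * q ^ n \<noteq> 0" and B: "\<And>n. 1 - B * q ^ n \<noteq> 0"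
  shows "bailey_weight a q A (q\<^sup>2) (q\<^sup>2 * B) k
    = qpoch_inf A q * qpoch_inf B q / (qpoch_inf q q * qpoch_inf (a * q) q) *
      ((1 - q) * q ^ (2 * k) / ((1 - A * q ^ k) * (1 - A * q * q ^ k) * (1 - B * q ^ k) * (1 - B * q * q ^ k)))"
proof -
  define u1 u2 u3 u4 where "u1 = 1 - A * q ^ k" and "u2 = 1 - A * q * q ^ k"
    and "u3 = 1 - B * q ^ k" and "u4 = 1 - B * q * q ^ k"
  have u: "u1 \<noteq> 0" "u2 \<noteq> 0" "u3 \<noteq> 0" "u4 \<noteq> 0"
    unfolding u1_def u2_def u3_def u4_def using A[of k] B[of k] A[of "Suc k"] B[of "Suc k"] by (simp_all add: mult_ac)
  have "1 - q\<^sup>2 * z * q ^ n \<noteq> 0" if "\<And>n. 1 - z * q ^ n \<noteq> 0" for z n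
    using that[of "Suc (Suc n)"] by (simp add: power2_eq_square mult_ac)
  then have nz: "qpoch (q\<^sup>2 * A) q k \<noteq> 0" "qpoch (q\<^sup>2 * B) q k \<noteq> 0"
    using qpoch_nonzero A B by blast+
  have nz': "qpoch_inf (a * q) q \<noteq> 0" "qpoch_inf (q\<^sup>2) q \<noteq> 0" "1 - q \<noteq> 0"
    using qpoch_inf_nonzero[OF q anz] qpoch_inf_nonzero[OF q qpoch_factor_nonzero[OF q], of "q\<^sup>2"] q
    by (auto simp: norm_power power_less_one_iff)
  have kAB: "qpoch A q k = (1 - A) * (1 - A * q) * qpoch (q\<^sup>2 * A) q k / (u1 * u2)"
    "qpoch B q k = (1 - B) * (1 - B * q) * qpoch (q\<^sup>2 * B) q k / (u3 * u4)"
    using qpoch_shift2_ratio[of A q k] qpoch_shift2_ratio[of B q k] u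
    unfolding u1_def u2_def u3_def u4_def by (simp_all add: eq_divide_eq)
  have iq: "qpoch_inf q q = (1 - q) * qpoch_inf (q\<^sup>2) q"
    using qpoch_inf_Suc_shift[OF q, of q] by (simp add: power2_eq_square)
  show ?thesis
    unfolding bailey_weight_def qpoch_hom_scale power_mult kAB iq
      qpoch_inf_shift2[OF q, of A] qpoch_inf_shift2[OF q, of B]
      u1_def[symmetric] u2_def[symmetric] u3_def[symmetric] u4_def[symmetric]
    using u nz nz' by (simp add: field_simps)
qed

lemma bailey_weight_q:
  assumes q: "norm q < 1" and anz: "\<And>j. 1 - a * q * q ^ j \<noteq> 0"
    and A: "\<And>n. 1 - A * q ^ n \<noteq> 0" and B: "\<And>n. 1 - B * q ^ n \<noteq> 0"
  shows "(1 - B) * bailey_weight a q A q (q\<^sup>2 * B) k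
    = qpoch_inf A q * qpoch_inf B q / (qpoch_inf q q * qpoch_inf (a * q) q) *
      (q ^ k * ((1 - A * q * q ^ k) * (1 - B * q ^ k)) /
        ((1 - A * q ^ k) * (1 - A * q * q ^ k) * (1 - B * q ^ k) * (1 - B * q * q ^ k)))"
proof -
  define u1 u2 u3 u4 where "u1 = 1 - A * q ^ k" and "u2 = 1 - A * q * q ^ k"
    and "u3 = 1 - B * q ^ k" and "u4 = 1 - B * q * q ^ k"
  have u: "u1 \<noteq> 0" "u2 \<noteq> 0" "u3 \<noteq> 0" "u4 \<noteq> 0"
    unfolding u1_def u2_def u3_def u4_def using A[of k] B[of k] A[of "Suc k"] B[of "Suc k"] by (simp_all add: mult_ac)
  have nz: "qpoch (q * A) q k \<noteq> 0" "qpoch (q\<^sup>2 * B) q k \<noteq> 0" "qpoch_inf (a * q) q \<noteq> 0"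
    "qpoch_inf q q \<noteq> 0"
    using qpoch_nonzero[of "q * A"] qpoch_nonzero[of "q\<^sup>2 * B"] A[of "Suc _"] B[of "Suc (Suc _)"]
      qpoch_inf_nonzero[OF q anz] qpoch_inf_nonzero[OF q qpoch_factor_nonzero[OF q q]]
    by (auto simp: power2_eq_square mult_ac)
  have hom: "qpoch_hom q (q\<^sup>2 * B) q k = q ^ k * qpoch (q * B) q k"
    using qpoch_hom_scale[of q "q * B" q k] by (simp add: power2_eq_square mult_ac)
  have kA: "qpoch A q k = (1 - A) * qpoch (q * A) q k / u1"
    using qpoch_shift_ratio[of A q k] u unfolding u1_def by (simp add: eq_divide_eq mult_ac)
  have kB: "qpoch (q * B) q k = (1 - q * B) * qpoch (q\<^sup>2 * B) q k / u4"
    using qpoch_shift_ratio[of "q * B" q k] u unfolding u4_def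
    by (simp add: eq_divide_eq power2_eq_square mult_ac)
  have iA: "qpoch_inf A q = (1 - A) * qpoch_inf (q * A) q"
    using qpoch_inf_Suc_shift[OF q, of A] by (simp add: mult_ac)
  have iB: "qpoch_inf B q = (1 - B) * (1 - q * B) * qpoch_inf (q\<^sup>2 * B) q"
    using qpoch_inf_shift2[OF q, of B] by (simp add: mult_ac)
  show ?thesis
    unfolding bailey_weight_def hom kA kB iA iB
      u1_def[symmetric] u2_def[symmetric] u3_def[symmetric] u4_def[symmetric]
    using u nz by (simp add: field_simps)
qed

lemma bailey_weight_q_q2_combination:
  assumes q: "norm q < 1" and anz: "\<And>j. 1 - a * q * q ^ j \<noteq> 0"
    and AB: "A * B * q = a" and A: "\<And>n. 1 - A * q ^ n \<noteq> 0" and B: "\<And>n. 1 - B * q ^ n \<noteq> 0"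
  shows "(1 - B) * bailey_weight a q A q (q\<^sup>2 * B) k + B * bailey_weight a q A (q\<^sup>2) (q\<^sup>2 * B) k
    = qpoch_inf A q * qpoch_inf B q / (qpoch_inf q q * qpoch_inf (a * q) q) *
      ((1 - (A + B) * q * q ^ k + a * q ^ (2 * k)) * q ^ k /
       ((1 - A * q ^ k) * (1 - A * q * q ^ k) * (1 - B * q ^ k) * (1 - B * q * q ^ k)))"
proof -
  define D where "D = (1 - A * q ^ k) * (1 - A * q * q ^ k) * (1 - B * q ^ k) * (1 - B * q * q ^ k)"
  have "D \<noteq> 0"
    unfolding D_def using A[of k] B[of k] A[of "Suc k"] B[of "Suc k"] by (simp add: mult_ac)
  moreover have N: "1 - (A + B) * q * q ^ k + a * q ^ (2 * k)
      = (1 - A * q * q ^ k) * (1 - B * q ^ k) + B * (1 - q) * q ^ k"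
    unfolding AB[symmetric] by (simp add: power_mult_distrib algebra_simps mult_2_right power_add)
  have q2k: "q ^ (2 * k) = q ^ k * q ^ k" by (simp add: mult_2 power_add)
  ultimately show ?thesis
    unfolding N unfolding bailey_weight_q[OF q anz A B] bailey_weight_q2[OF q anz A B] D_def[symmetric] q2k
    using qpoch_inf_nonzero[OF q anz] qpoch_inf_nonzero[OF q qpoch_factor_nonzero[OF q q]]
    by (simp add: field_simps)
qed

lemma summable_bailey_weight_q2:
  assumes q: "norm q < 1" and anz: "\<And>j. 1 - a * q * q ^ j \<noteq> 0"
    and A: "\<And>n. 1 - A * q ^ n \<noteq> 0" and B: "\<And>n. 1 - B * q ^ n \<noteq> 0"
    and summable: "summable (\<lambda>n. (1 - (A + B) * q * q ^ n + a * q ^ (2 * n)) * q ^ n * \<alpha> n /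
      ((1 - A * q ^ n) * (1 - A * q * q ^ n) * (1 - B * q ^ n) * (1 - B * q * q ^ n)))"
  shows "summable (\<lambda>k. \<alpha> k * bailey_weight a q A (q\<^sup>2) (q\<^sup>2 * B) k)"
proof -
  define K where "K = qpoch_inf A q * qpoch_inf B q / (qpoch_inf q q * qpoch_inf (a * q) q)"
  define D where "D n = (1 - A * q ^ n) * (1 - A * q * q ^ n) * (1 - B * q ^ n) * (1 - B * q * q ^ n)" for n
  define N where "N n = 1 - (A + B) * q * q ^ n + a * q ^ (2 * n)" for n
  have "N \<longlonglongrightarrow> 1 - (A + B) * q * 0 + a * 0"
    unfolding N_def power_mult using q by (intro tendsto_intros LIMSEQ_power_zero) (auto simp: norm_power power_less_one_iff)
  then have N: "N \<longlonglongrightarrow> 1" by simp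
  have S: "summable (\<lambda>k. K * (1 - q) * (q ^ k * (N k * q ^ k * \<alpha> k / D k) / N k))"
    using summable unfolding N_def[symmetric] D_def[symmetric]
    by (intro summable_mult summable_power_mult_divide N q)
  have ev: "\<forall>\<^sub>F k in sequentially.
      K * (1 - q) * (q ^ k * (N k * q ^ k * \<alpha> k / D k) / N k) = \<alpha> k * bailey_weight a q A (q\<^sup>2) (q\<^sup>2 * B) k"
    using tendsto_imp_eventually_ne[OF N one_neq_zero]
    by eventually_elim
      (simp add: bailey_weight_q2[OF q anz A B] K_def[symmetric] D_def[symmetric] mult_2 power_add)
  show ?thesis using S unfolding summable_cong[OF ev] .
qed

lemma bailey_pair_sums_q2:
  fixes A B :: complex
  assumes q: "norm q < 1" and bp: "bailey_pair \<alpha> \<beta> a q" and anz: "\<And>j. 1 - a * q * q ^ j \<noteq> 0"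
    and AB: "A * B * q = a" and A: "\<And>n. 1 - A * q ^ n \<noteq> 0" and B: "\<And>n. 1 - B * q ^ n \<noteq> 0"
    and summable: "summable (\<lambda>n. (1 - q) * q ^ (2 * n) * \<alpha> n /
      ((1 - A * q ^ n) * (1 - A * q * q ^ n) * (1 - B * q ^ n) * (1 - B * q * q ^ n)))"
  shows "(\<lambda>n. qpoch A q n * qpoch B q n * q ^ (2 * n) * \<beta> n) sums
    (qpoch_inf A q * qpoch_inf B q / (qpoch_inf q q * qpoch_inf (a * q) q) *
     (\<Sum>n. (1 - q) * q ^ (2 * n) * \<alpha> n /
      ((1 - A * q ^ n) * (1 - A * q * q ^ n) * (1 - B * q ^ n) * (1 - B * q * q ^ n))))"
proof -
  define K where "K = qpoch_inf A q * qpoch_inf B q / (qpoch_inf q q * qpoch_inf (a * q) q)"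
  define g where "g n = (1 - q) * q ^ (2 * n) * \<alpha> n /
      ((1 - A * q ^ n) * (1 - A * q * q ^ n) * (1 - B * q ^ n) * (1 - B * q * q ^ n))" for n
  have q2: "norm (q\<^sup>2) < 1" using q by (simp add: norm_power power_less_one_iff)
  have twice: "1 - q\<^sup>2 * z * q ^ j \<noteq> 0" if "\<And>n. 1 - z * q ^ n \<noteq> 0" for z j
    using that[of "Suc (Suc j)"] by (simp add: power2_eq_square mult_ac)
  have \<rho>y: "A * (q\<^sup>2 * B) = a * q" using AB by (simp add: power2_eq_square mult_ac)
  have weight: "\<alpha> k * bailey_weight a q A (q\<^sup>2) (q\<^sup>2 * B) k = K * g k" for k
    unfolding bailey_weight_q2[OF q anz A B] K_def g_def by (simp add: mult_ac)
  have "summable (\<lambda>k. \<alpha> k * bailey_weight a q A (q\<^sup>2) (q\<^sup>2 * B) k)"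
    unfolding weight g_def by (rule summable_mult[OF summable])
  from bailey_lemma_sums[OF q q2 \<rho>y anz twice[OF B] twice[OF A] bp this]
  have "(\<lambda>n. qpoch A q n * qpoch_hom (q\<^sup>2) (q\<^sup>2 * B) q n * \<beta> n) sums (K * suminf g)"
    unfolding weight suminf_mult[OF summable[folded g_def]] .
  moreover have "(q\<^sup>2) ^ n = q ^ (2 * n)" for n by (simp add: power_mult)
  ultimately show ?thesis
    unfolding K_def g_def qpoch_hom_scale by (simp add: mult_ac)
qed

lemma bailey_pair_sums_q:
  fixes A B :: complex
  assumes q: "norm q < 1" and bp: "bailey_pair \<alpha> \<beta> a q" and anz: "\<And>j. 1 - a * q * q ^ j \<noteq> 0"
    and AB: "A * B * q = a" and A: "\<And>n. 1 - A * q ^ n \<noteq> 0" and B: "\<And>n. 1 - B * q ^ n \<noteq> 0"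
    and summable: "summable (\<lambda>n. (1 - (A + B) * q * q ^ n + a * q ^ (2 * n)) * q ^ n * \<alpha> n /
      ((1 - A * q ^ n) * (1 - A * q * q ^ n) * (1 - B * q ^ n) * (1 - B * q * q ^ n)))"
  shows "(\<lambda>n. qpoch A q n * qpoch B q n * q ^ n * \<beta> n) sums
    (qpoch_inf A q * qpoch_inf B q / (qpoch_inf q q * qpoch_inf (a * q) q) *
     (\<Sum>n. (1 - (A + B) * q * q ^ n + a * q ^ (2 * n)) * q ^ n * \<alpha> n /
      ((1 - A * q ^ n) * (1 - A * q * q ^ n) * (1 - B * q ^ n) * (1 - B * q * q ^ n))))"
proof -
  define K where "K = qpoch_inf A q * qpoch_inf B q / (qpoch_inf q q * qpoch_inf (a * q) q)"
  define g where "g n = (1 - (A + B) * q * q ^ n + a * q ^ (2 * n)) * q ^ n * \<alpha> n /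
      ((1 - A * q ^ n) * (1 - A * q * q ^ n) * (1 - B * q ^ n) * (1 - B * q * q ^ n))" for n
  define w1 where "w1 k = \<alpha> k * bailey_weight a q A q (q\<^sup>2 * B) k" for k
  define w2 where "w2 k = \<alpha> k * bailey_weight a q A (q\<^sup>2) (q\<^sup>2 * B) k" for k
  have q2: "norm (q\<^sup>2) < 1" using q by (simp add: norm_power power_less_one_iff)
  have shift: "1 - q ^ i * z * q ^ j \<noteq> 0" if "\<And>n. 1 - z * q ^ n \<noteq> 0" for z i j
    using that[of "i + j"] by (simp add: power_add mult_ac)
  have \<rho>y: "A * (q\<^sup>2 * B) = a * q" using AB by (simp add: power2_eq_square mult_ac)
  have comb: "(1 - B) * w1 k + B * w2 k = K * g k" for k
  proof -
    have "(1 - B) * w1 k + B * w2 k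
        = \<alpha> k * ((1 - B) * bailey_weight a q A q (q\<^sup>2 * B) k + B * bailey_weight a q A (q\<^sup>2) (q\<^sup>2 * B) k)"
      by (simp add: w1_def w2_def algebra_simps)
    then show ?thesis
      unfolding bailey_weight_q_q2_combination[OF q anz AB A B] K_def g_def by (simp add: mult_ac)
  qed
  have S2: "summable w2"
    unfolding w2_def by (rule summable_bailey_weight_q2[OF q anz A B summable])
  have "w1 = (\<lambda>k. (K * g k - B * w2 k) / (1 - B))"
    using comb B[of 0] by (auto simp: fun_eq_iff field_simps)
  then have S1: "summable w1"
    using S2 summable[folded g_def] by (simp add: summable_divide summable_diff summable_mult)
  have qA: "1 - q * A * q ^ j \<noteq> 0" for j using shift[OF A, of 1 j] by simp
  have "(\<lambda>n. qpoch A q n * qpoch_hom q (q\<^sup>2 * B) q n * \<beta> n) sums suminf w1"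
    using bailey_lemma_sums[OF q q \<rho>y anz shift[OF B, of 2] qA bp S1[unfolded w1_def]]
    unfolding w1_def .
  moreover have "(\<lambda>n. qpoch A q n * qpoch_hom (q\<^sup>2) (q\<^sup>2 * B) q n * \<beta> n) sums suminf w2"
    using bailey_lemma_sums[OF q q2 \<rho>y anz shift[OF B, of 2] shift[OF A, of 2] bp S2[unfolded w2_def]]
    unfolding w2_def .
  ultimately have "(\<lambda>n. (1 - B) * (qpoch A q n * qpoch_hom q (q\<^sup>2 * B) q n * \<beta> n)
      + B * (qpoch A q n * qpoch_hom (q\<^sup>2) (q\<^sup>2 * B) q n * \<beta> n)) sums ((1 - B) * suminf w1 + B * suminf w2)"
    by (intro sums_add sums_mult)
  moreover have "(1 - B) * (qpoch A q n * qpoch_hom q (q\<^sup>2 * B) q n * \<beta> n)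
      + B * (qpoch A q n * qpoch_hom (q\<^sup>2) (q\<^sup>2 * B) q n * \<beta> n)
    = qpoch A q n * \<beta> n * ((1 - B) * qpoch_hom q (q\<^sup>2 * B) q n + B * qpoch_hom (q\<^sup>2) (q\<^sup>2 * B) q n)" for n
    by (simp add: algebra_simps)
  moreover have "(1 - B) * suminf w1 + B * suminf w2 = K * suminf g"
  proof -
    have "(1 - B) * suminf w1 + B * suminf w2 = (\<Sum>k. (1 - B) * w1 k + B * w2 k)"
      using suminf_add[OF summable_mult[OF S1] summable_mult[OF S2]] suminf_mult[OF S1] suminf_mult[OF S2]
      by simp
    also have "\<dots> = K * suminf g"
      unfolding comb by (rule suminf_mult[OF summable[folded g_def]])
    finally show ?thesis .
  qed
  ultimately show ?thesis
    unfolding qpoch_hom_q_q2_combination K_def g_def by (simp add: mult_ac)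
qed

lemma z_substitution:
  fixes q r z s :: complex
  assumes hr: "r ^ 2 = q" and q: "q \<noteq> 0" and z: "z \<noteq> 0"
  shows "z * s * q ^ n / r = z * s / r * q ^ n"
    and "z * s * q ^ n * r = z * s / r * q * q ^ n"
    and "s * q ^ n / (z * r) = s / (z * r) * q ^ n"
    and "s * q ^ n * r / z = s / (z * r) * q * q ^ n"
    and "(z + 1 / z) * s * q ^ n * r = (z * s / r + s / (z * r)) * q * q ^ n"
    and "z * s / r * (s / (z * r)) * q = s ^ 2"
  using q z unfolding hr[symmetric] by (simp_all add: field_simps power2_eq_square)

lemma bailey_pair_sum_z_q:
  fixes a q s r z :: complex and \<alpha> \<beta> :: "nat \<Rightarrow> complex"
  assumes q: "norm q < 1" and hq0: "q \<noteq> 0" and hs: "s ^ 2 = a" and hr: "r ^ 2 = q"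
    and bp: "bailey_pair \<alpha> \<beta> a q" and anz: "\<forall>j\<ge>1. a * q ^ j \<noteq> 1" and z: "z \<noteq> 0"
    and denom_nz: "\<forall>n. (1 - z * s * q ^ n / r) * (1 - z * s * q ^ n * r) * (1 - s * q ^ n / (z * r)) * (1 - s * q ^ n * r / z) \<noteq> 0"
    and summable: "summable (\<lambda>n. (1 - (z + 1 / z) * s * q ^ n * r + a * q ^ (2 * n)) * q ^ n * \<alpha> n /
            ((1 - z * s * q ^ n / r) * (1 - z * s * q ^ n * r) * (1 - s * q ^ n / (z * r)) * (1 - s * q ^ n * r / z)))"
  shows "(\<Sum>n. qpoch (z * s / r) q n * qpoch (s / (z * r)) q n * q ^ n * \<beta> n)
         = qpoch_inf (z * s / r) q * qpoch_inf (s / (z * r)) q / (qpoch_inf q q * qpoch_inf (a * q) q) *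
           (\<Sum>n. (1 - (z + 1 / z) * s * q ^ n * r + a * q ^ (2 * n)) * q ^ n * \<alpha> n /
            ((1 - z * s * q ^ n / r) * (1 - z * s * q ^ n * r) * (1 - s * q ^ n / (z * r)) * (1 - s * q ^ n * r / z)))"
proof -
  note subst = z_substitution[OF hr hq0 z, of s]
  have anz': "1 - a * q * q ^ j \<noteq> 0" for j using anz[rule_format, of "Suc j"] by (auto simp: mult_ac)
  have "1 - z * s / r * q ^ n \<noteq> 0" "1 - s / (z * r) * q ^ n \<noteq> 0" for n
    using denom_nz[rule_format, of n] unfolding subst by auto
  from bailey_pair_sums_q[OF q bp anz' subst(6)[unfolded hs] this] summable
  show ?thesis unfolding subst by (simp add: sums_iff)
qed

lemma bailey_pair_sum_z_q2:
  fixes a q s r z :: complex and \<alpha> \<beta> :: "nat \<Rightarrow> complex"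
  assumes q: "norm q < 1" and hq0: "q \<noteq> 0" and hs: "s ^ 2 = a" and hr: "r ^ 2 = q"
    and bp: "bailey_pair \<alpha> \<beta> a q" and anz: "\<forall>j\<ge>1. a * q ^ j \<noteq> 1" and z: "z \<noteq> 0"
    and denom_nz: "\<forall>n. (1 - z * s * q ^ n / r) * (1 - z * s * q ^ n * r) * (1 - s * q ^ n / (z * r)) * (1 - s * q ^ n * r / z) \<noteq> 0"
    and summable: "summable (\<lambda>n. (1 - q) * q ^ (2 * n) * \<alpha> n /
            ((1 - z * s * q ^ n / r) * (1 - z * s * q ^ n * r) * (1 - s * q ^ n / (z * r)) * (1 - s * q ^ n * r / z)))"
  shows "(\<Sum>n. qpoch (z * s / r) q n * qpoch (s / (z * r)) q n * q ^ (2 * n) * \<beta> n)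
         = qpoch_inf (z * s / r) q * qpoch_inf (s / (z * r)) q / (qpoch_inf q q * qpoch_inf (a * q) q) *
           (\<Sum>n. (1 - q) * q ^ (2 * n) * \<alpha> n /
            ((1 - z * s * q ^ n / r) * (1 - z * s * q ^ n * r) * (1 - s * q ^ n / (z * r)) * (1 - s * q ^ n * r / z)))"
proof -
  note subst = z_substitution[OF hr hq0 z, of s]
  have anz': "1 - a * q * q ^ j \<noteq> 0" for j using anz[rule_format, of "Suc j"] by (auto simp: mult_ac)
  have "1 - z * s / r * q ^ n \<noteq> 0" "1 - s / (z * r) * q ^ n \<noteq> 0" for n
    using denom_nz[rule_format, of n] unfolding subst by auto
  from bailey_pair_sums_q2[OF q bp anz' subst(6)[unfolded hs] this] summable
  show ?thesis unfolding subst by (simp add: sums_iff)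
qed

definition omega :: complex where
  "omega = Complex (-1/2) (sqrt 3 / 2)"

lemma omega_nonzero: "omega \<noteq> 0"
  by (simp add: omega_def complex_eq_iff)

lemma omega_plus_inverse: "omega + 1 / omega = -1"
proof -
  have "omega * (-1 - omega) = 1"
    by (simp add: omega_def complex_eq_iff algebra_simps power2_eq_square)
  then show ?thesis using omega_nonzero by (simp add: field_simps)
qed

lemma omega_factor: "(1 - omega * t) * (1 - t / omega) = 1 + t + t\<^sup>2"
proof -
  have "(1 - omega * t) * (1 - t / omega) = 1 - (omega + 1 / omega) * t + t * t"
    using omega_nonzero by (simp add: field_simps)
  then show ?thesis unfolding omega_plus_inverse by (simp add: power2_eq_square)
qed

lemma omega_cube_factor: "(1 - omega * t) * (1 - t / omega) * (1 - t) = 1 - t ^ 3"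
  unfolding omega_factor by (simp add: algebra_simps power2_eq_square power3_eq_cube)

lemma omega_quartic_product:
  assumes "1 - x \<noteq> 0" "1 - y \<noteq> 0"
  shows "(1 - omega * x) * (1 - omega * y) * (1 - x / omega) * (1 - y / omega)
    = (1 - x ^ 3) * (1 - y ^ 3) / ((1 - x) * (1 - y))"
proof -
  have "(1 - omega * x) * (1 - omega * y) * (1 - x / omega) * (1 - y / omega)
      = ((1 - omega * x) * (1 - x / omega)) * ((1 - omega * y) * (1 - y / omega))"
    by (simp only: mult_ac)
  also have "\<dots> = (1 - x ^ 3) * (1 - y ^ 3) / ((1 - x) * (1 - y))"
    unfolding omega_factor using assms
    by (simp add: eq_divide_eq) (simp add: algebra_simps power2_eq_square power3_eq_cube)
  finally show ?thesis .
qed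

lemma qpoch_omega_cube: "qpoch (omega * u) q n * qpoch (u / omega) q n * qpoch u q n = qpoch (u ^ 3) (q ^ 3) n"
proof (induction n)
  case (Suc n)
  have "(1 - omega * u * q ^ n) * (1 - u / omega * q ^ n) * (1 - u * q ^ n) = 1 - u ^ 3 * (q ^ 3) ^ n"
    using omega_cube_factor[of "u * q ^ n"] by (simp add: power_mult_distrib power_mult[symmetric] mult_ac)
  then show ?case
    using Suc by (simp add: qpoch_Suc mult_ac)
qed simp

lemma qpoch_inf_omega_cube:
  assumes q: "norm q < 1"
  shows "qpoch_inf (omega * u) q * qpoch_inf (u / omega) q * qpoch_inf u q = qpoch_inf (u ^ 3) (q ^ 3)"
proof -
  have q3: "norm (q ^ 3) < 1" using q by (simp add: norm_power power_less_one_iff)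
  have "(\<lambda>n. qpoch (omega * u) q n * qpoch (u / omega) q n * qpoch u q n) \<longlonglongrightarrow>
      qpoch_inf (omega * u) q * qpoch_inf (u / omega) q * qpoch_inf u q"
    by (intro tendsto_mult qpoch_LIMSEQ q)
  moreover have "(\<lambda>n. qpoch (omega * u) q n * qpoch (u / omega) q n * qpoch u q n) \<longlonglongrightarrow> qpoch_inf (u ^ 3) (q ^ 3)"
    unfolding qpoch_omega_cube by (rule qpoch_LIMSEQ[OF q3])
  ultimately show ?thesis using LIMSEQ_unique by blast
qed

lemma omega_substitution:
  fixes q r s :: complex
  assumes q: "norm q < 1" and hr: "r ^ 2 = q" and hq0: "q \<noteq> 0"
    and cube_nz: "\<forall>n. 1 - s * q ^ n / r \<noteq> 0 \<and> (1 - s ^ 3 * q ^ (3 * n) / r ^ 3) * (1 - s ^ 3 * q ^ (3 * n) * r ^ 3) \<noteq> 0"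
  shows "1 - omega * (s / r) * q ^ n \<noteq> 0"
    and "1 - s / r / omega * q ^ n \<noteq> 0"
    and "omega * (s / r) * (s / r / omega) * q = s ^ 2"
    and "(omega * (s / r) + s / r / omega) * q * q ^ n = - (s * q ^ n * r)"
    and "qpoch (omega * (s / r)) q n * qpoch (s / r / omega) q n = qpoch (s ^ 3 / r ^ 3) (q ^ 3) n / qpoch (s / r) q n"
    and "qpoch_inf (omega * (s / r)) q * qpoch_inf (s / r / omega) q
      = qpoch_inf (s ^ 3 / r ^ 3) (q ^ 3) / qpoch_inf (s / r) q"
    and "(1 - omega * (s / r) * q ^ n) * (1 - omega * (s / r) * q * q ^ n) *
        (1 - s / r / omega * q ^ n) * (1 - s / r / omega * q * q ^ n)
      = (1 - s ^ 3 * q ^ (3 * n) / r ^ 3) * (1 - s ^ 3 * q ^ (3 * n) * r ^ 3) / ((1 - s * q ^ n / r) * (1 - s * q ^ n * r))"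
proof -
  define x where "x m = s / r * q ^ m" for m
  have r: "r \<noteq> 0" using hr hq0 by auto
  have cube: "1 - (x m) ^ 3 = (1 - omega * x m) * (1 - x m / omega) * (1 - x m)" for m
    by (simp add: omega_cube_factor)
  have x3: "x m ^ 3 = s ^ 3 * q ^ (3 * m) / r ^ 3" "x (Suc m) ^ 3 = s ^ 3 * q ^ (3 * m) * r ^ 3" for m
    unfolding x_def hr[symmetric] using r
    by (simp_all add: power_divide power_mult_distrib power_mult[symmetric] field_simps)
  have x1: "x m = s * q ^ m / r" "x (Suc m) = s * q ^ m * r" for m
    unfolding x_def hr[symmetric] using r by (simp_all add: field_simps power2_eq_square)
  have nz: "(1 - x m ^ 3) * (1 - x (Suc m) ^ 3) \<noteq> 0" for m
    using cube_nz unfolding x3(1)[of m] x3(2)[of m] by blast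
  have unz: "1 - x m \<noteq> 0" for m
    using cube_nz unfolding x1(1)[of m] by blast
  have nz': "1 - omega * x m \<noteq> 0" "1 - x m / omega \<noteq> 0" for m
    using nz[of m] unfolding cube by auto
  then show "1 - omega * (s / r) * q ^ n \<noteq> 0" "1 - s / r / omega * q ^ n \<noteq> 0"
    unfolding x_def by (simp_all add: mult_ac)
  show "omega * (s / r) * (s / r / omega) * q = s ^ 2"
    using omega_nonzero r unfolding hr[symmetric] by (simp add: field_simps power2_eq_square)
  have "(omega * (s / r) + s / r / omega) * q * q ^ n = (omega + 1 / omega) * x (Suc n)"
    using omega_nonzero r by (simp add: x_def field_simps)
  then show "(omega * (s / r) + s / r / omega) * q * q ^ n = - (s * q ^ n * r)"
    unfolding omega_plus_inverse x1(2) by simp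
  show "qpoch (omega * (s / r)) q n * qpoch (s / r / omega) q n = qpoch (s ^ 3 / r ^ 3) (q ^ 3) n / qpoch (s / r) q n"
    using qpoch_omega_cube[of "s / r" q n] qpoch_nonzero[OF unz[unfolded x_def], of n]
    by (simp add: power_divide field_simps)
  show "qpoch_inf (omega * (s / r)) q * qpoch_inf (s / r / omega) q
      = qpoch_inf (s ^ 3 / r ^ 3) (q ^ 3) / qpoch_inf (s / r) q"
    using qpoch_inf_omega_cube[OF q, of "s / r"] qpoch_inf_nonzero[OF q unz[unfolded x_def]]
    by (simp add: power_divide field_simps)
  show "(1 - omega * (s / r) * q ^ n) * (1 - omega * (s / r) * q * q ^ n) *
        (1 - s / r / omega * q ^ n) * (1 - s / r / omega * q * q ^ n)
      = (1 - s ^ 3 * q ^ (3 * n) / r ^ 3) * (1 - s ^ 3 * q ^ (3 * n) * r ^ 3) / ((1 - s * q ^ n / r) * (1 - s * q ^ n * r))"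
  proof -
    have "(1 - omega * (s / r) * q ^ n) * (1 - omega * (s / r) * q * q ^ n) *
        (1 - s / r / omega * q ^ n) * (1 - s / r / omega * q * q ^ n)
      = (1 - omega * x n) * (1 - omega * x (Suc n)) * (1 - x n / omega) * (1 - x (Suc n) / omega)"
      by (simp add: x_def mult_ac)
    also have "\<dots> = (1 - x n ^ 3) * (1 - x (Suc n) ^ 3) / ((1 - x n) * (1 - x (Suc n)))"
      by (rule omega_quartic_product[OF unz unz])
    also have "\<dots> = (1 - s ^ 3 * q ^ (3 * n) / r ^ 3) * (1 - s ^ 3 * q ^ (3 * n) * r ^ 3) /
        ((1 - s * q ^ n / r) * (1 - s * q ^ n * r))"
      by (simp only: x3(1)[of n] x3(2)[of n]) (simp only: x1(1)[of n] x1(2)[of n])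
    finally show ?thesis .
  qed
qed

lemma bailey_pair_sum_cube_q:
  fixes a q s r :: complex and \<alpha> \<beta> :: "nat \<Rightarrow> complex"
  assumes q: "norm q < 1" and hq0: "q \<noteq> 0" and hs: "s ^ 2 = a" and hr: "r ^ 2 = q"
    and bp: "bailey_pair \<alpha> \<beta> a q" and anz: "\<forall>j\<ge>1. a * q ^ j \<noteq> 1"
    and cube_nz: "\<forall>n. 1 - s * q ^ n / r \<noteq> 0 \<and> (1 - s ^ 3 * q ^ (3 * n) / r ^ 3) * (1 - s ^ 3 * q ^ (3 * n) * r ^ 3) \<noteq> 0"
    and summable: "summable (\<lambda>n. (1 - s * q ^ n / r) * (1 - s * q ^ n * r) * (1 + s * q ^ n * r + a * q ^ (2 * n)) * q ^ n * \<alpha> n /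
            ((1 - s ^ 3 * q ^ (3 * n) / r ^ 3) * (1 - s ^ 3 * q ^ (3 * n) * r ^ 3)))"
  shows "(\<Sum>n. qpoch (s ^ 3 / r ^ 3) (q ^ 3) n * q ^ n * \<beta> n / qpoch (s / r) q n)
         = qpoch_inf (s ^ 3 / r ^ 3) (q ^ 3) / (qpoch_inf q q * qpoch_inf (a * q) q * qpoch_inf (s / r) q) *
           (\<Sum>n. (1 - s * q ^ n / r) * (1 - s * q ^ n * r) * (1 + s * q ^ n * r + a * q ^ (2 * n)) * q ^ n * \<alpha> n /
            ((1 - s ^ 3 * q ^ (3 * n) / r ^ 3) * (1 - s ^ 3 * q ^ (3 * n) * r ^ 3)))"
proof -
  note subst = omega_substitution[OF q hr hq0 cube_nz]
  have anz': "1 - a * q * q ^ j \<noteq> 0" for j using anz[rule_format, of "Suc j"] by (auto simp: mult_ac)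
  have "(\<lambda>n. (1 - (omega * (s / r) + s / r / omega) * q * q ^ n + a * q ^ (2 * n)) * q ^ n * \<alpha> n /
      ((1 - omega * (s / r) * q ^ n) * (1 - omega * (s / r) * q * q ^ n) *
       (1 - s / r / omega * q ^ n) * (1 - s / r / omega * q * q ^ n)))
    = (\<lambda>n. (1 - s * q ^ n / r) * (1 - s * q ^ n * r) * (1 + s * q ^ n * r + a * q ^ (2 * n)) * q ^ n * \<alpha> n /
            ((1 - s ^ 3 * q ^ (3 * n) / r ^ 3) * (1 - s ^ 3 * q ^ (3 * n) * r ^ 3)))"
    unfolding subst(4,7) by (simp add: fun_eq_iff mult_ac)
  with bailey_pair_sums_q[OF q bp anz' subst(3)[unfolded hs] subst(1,2)] summable
  show ?thesis unfolding subst(5,6) by (simp add: sums_iff mult_ac)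
qed

lemma bailey_pair_sum_cube_q2:
  fixes a q s r :: complex and \<alpha> \<beta> :: "nat \<Rightarrow> complex"
  assumes q: "norm q < 1" and hq0: "q \<noteq> 0" and hs: "s ^ 2 = a" and hr: "r ^ 2 = q"
    and bp: "bailey_pair \<alpha> \<beta> a q" and anz: "\<forall>j\<ge>1. a * q ^ j \<noteq> 1"
    and cube_nz: "\<forall>n. 1 - s * q ^ n / r \<noteq> 0 \<and> (1 - s ^ 3 * q ^ (3 * n) / r ^ 3) * (1 - s ^ 3 * q ^ (3 * n) * r ^ 3) \<noteq> 0"
    and summable: "summable (\<lambda>n. (1 - q) * (1 - s * q ^ n / r) * (1 - s * q ^ n * r) * q ^ (2 * n) * \<alpha> n /
            ((1 - s ^ 3 * q ^ (3 * n) / r ^ 3) * (1 - s ^ 3 * q ^ (3 * n) * r ^ 3)))"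
  shows "(\<Sum>n. qpoch (s ^ 3 / r ^ 3) (q ^ 3) n * q ^ (2 * n) * \<beta> n / qpoch (s / r) q n)
         = qpoch_inf (s ^ 3 / r ^ 3) (q ^ 3) / (qpoch_inf q q * qpoch_inf (a * q) q * qpoch_inf (s / r) q) *
           (\<Sum>n. (1 - q) * (1 - s * q ^ n / r) * (1 - s * q ^ n * r) * q ^ (2 * n) * \<alpha> n /
            ((1 - s ^ 3 * q ^ (3 * n) / r ^ 3) * (1 - s ^ 3 * q ^ (3 * n) * r ^ 3)))"
proof -
  note subst = omega_substitution[OF q hr hq0 cube_nz]
  have anz': "1 - a * q * q ^ j \<noteq> 0" for j using anz[rule_format, of "Suc j"] by (auto simp: mult_ac)
  have "(\<lambda>n. (1 - q) * q ^ (2 * n) * \<alpha> n /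
      ((1 - omega * (s / r) * q ^ n) * (1 - omega * (s / r) * q * q ^ n) *
       (1 - s / r / omega * q ^ n) * (1 - s / r / omega * q * q ^ n)))
    = (\<lambda>n. (1 - q) * (1 - s * q ^ n / r) * (1 - s * q ^ n * r) * q ^ (2 * n) * \<alpha> n /
            ((1 - s ^ 3 * q ^ (3 * n) / r ^ 3) * (1 - s ^ 3 * q ^ (3 * n) * r ^ 3)))"
    unfolding subst(7) by (simp add: fun_eq_iff mult_ac)
  with bailey_pair_sums_q2[OF q bp anz' subst(3)[unfolded hs] subst(1,2)] summable
  show ?thesis unfolding subst(5,6) by (simp add: sums_iff mult_ac)
qed

lemma bailey_weight_base_q2:
  assumes q: "norm q < 1" and s_even: "\<And>j. 1 + s * q ^ (2 * j) \<noteq> 0"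
    and s_odd: "\<And>j. 1 + s * q ^ (2 * j + 1) \<noteq> 0"
  shows "bailey_weight a (q\<^sup>2) (- s) q (- s * q\<^sup>2) k
    = qpoch_inf (- s * q) q / (qpoch_inf (a * q\<^sup>2) (q\<^sup>2) * qpoch_inf q (q\<^sup>2)) * ((1 + s) * q ^ k / (1 + s * q ^ (2 * k)))"
proof -
  have pj: "(q\<^sup>2) ^ j = q ^ (2 * j)" for j by (simp add: power_mult)
  have "1 - - s * q\<^sup>2 * (q\<^sup>2) ^ j \<noteq> 0" for j
    using s_even[of "Suc j"] unfolding power_mult power_Suc by (simp add: mult.assoc)
  then have Y: "qpoch (- s * q\<^sup>2) (q\<^sup>2) k \<noteq> 0" by (rule qpoch_nonzero)
  have "1 - - s * q * (q\<^sup>2) ^ j \<noteq> 0" for j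
    using s_odd[of j] by (simp add: pj power_add mult_ac)
  then have C: "qpoch (- s * q) (q\<^sup>2) k \<noteq> 0" by (rule qpoch_nonzero)
  have "qpoch (- s) (q\<^sup>2) k = (1 + s) * qpoch (- s * q\<^sup>2) (q\<^sup>2) k / (1 + s * q ^ (2 * k))"
    using qpoch_shift_ratio[of "- s" "q\<^sup>2" k] s_even[of k] unfolding pj by (simp add: eq_divide_eq)
  moreover have "qpoch_hom q (- s * q\<^sup>2) (q\<^sup>2) k = q ^ k * qpoch (- s * q) (q\<^sup>2) k"
    using qpoch_hom_scale[of q "- s * q" "q\<^sup>2" k] by (simp add: power2_eq_square mult_ac)
  moreover have "qpoch_inf (- s * q) q = qpoch_inf (- s * q\<^sup>2) (q\<^sup>2) * qpoch_inf (- s * q) (q\<^sup>2)"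
    unfolding qpoch_inf_double[OF q, of "- s * q"] by (simp add: power2_eq_square mult_ac)
  ultimately show ?thesis
    unfolding bailey_weight_def mult.commute[of q "- s"] using Y C s_even[of k] by simp
qed

lemma bailey_pair_sum_base_q2:
  fixes a q s :: complex and \<alpha> \<beta> :: "nat \<Rightarrow> complex"
  assumes q: "norm q < 1" and hs: "s ^ 2 = a"
    and bp: "bailey_pair \<alpha> \<beta> a (q ^ 2)" and anz: "\<forall>j\<ge>1. a * q ^ (2 * j) \<noteq> 1"
    and snz: "\<forall>n. 1 + s * q ^ (2 * n) \<noteq> 0"
    and summable: "summable (\<lambda>n. (1 + s) * q ^ n * \<alpha> n / (1 + s * q ^ (2 * n)))"
  shows "(\<Sum>n. qpoch (- s) q (2 * n) * q ^ n * \<beta> n)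
       = qpoch_inf (- s * q) q / (qpoch_inf (a * q ^ 2) (q ^ 2) * qpoch_inf q (q ^ 2)) *
         (\<Sum>n. (1 + s) * q ^ n * \<alpha> n / (1 + s * q ^ (2 * n)))"
proof -
  define K where "K = qpoch_inf (- s * q) q / (qpoch_inf (a * q\<^sup>2) (q\<^sup>2) * qpoch_inf q (q\<^sup>2))"
  define f where "f n = (1 + s) * q ^ n * \<alpha> n / (1 + s * q ^ (2 * n))" for n
  have q2: "norm (q\<^sup>2) < 1" using q by (simp add: norm_power power_less_one_iff)
  have pj: "(q\<^sup>2) ^ j = q ^ (2 * j)" for j by (simp add: power_mult)
  have anz': "1 - a * q\<^sup>2 * (q\<^sup>2) ^ j \<noteq> 0" for j
    using anz[rule_format, of "Suc j"] unfolding pj by (auto simp: power2_eq_square mult_ac)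
  have s_odd: "1 + s * q ^ (2 * j + 1) \<noteq> 0" for j
  proof
    assume "1 + s * q ^ (2 * j + 1) = 0"
    then have "(s * q ^ (2 * j + 1)) ^ 2 = 1"
      by (metis add_eq_0_iff power2_minus power_one)
    moreover have "(s * q ^ (2 * j + 1)) ^ 2 = a * q ^ (2 * (2 * j + 1))"
      unfolding power_mult_distrib hs[symmetric] by (simp only: power_mult[symmetric] mult.commute)
    ultimately show False using anz[rule_format, of "2 * j + 1"] by simp
  qed
  have weight: "\<alpha> k * bailey_weight a (q\<^sup>2) (- s) q (- s * q\<^sup>2) k = K * f k" for k
    unfolding bailey_weight_base_q2[OF q snz[rule_format] s_odd] K_def f_def by (simp add: mult_ac)
  have S: "summable (\<lambda>k. \<alpha> k * bailey_weight a (q\<^sup>2) (- s) q (- s * q\<^sup>2) k)"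
    unfolding weight f_def by (rule summable_mult[OF summable])
  have \<rho>y: "- s * (- s * q\<^sup>2) = a * q\<^sup>2" using hs by (simp add: power2_eq_square)
  have ynz: "1 - - s * q\<^sup>2 * (q\<^sup>2) ^ j \<noteq> 0" for j
    using snz[rule_format, of "Suc j"] unfolding power_mult power_Suc by (simp add: mult.assoc)
  have x\<rho>nz: "1 - q * - s * (q\<^sup>2) ^ j \<noteq> 0" for j
    using s_odd[of j] by (simp add: pj power_add mult_ac)
  have "(\<lambda>n. qpoch (- s) (q\<^sup>2) n * qpoch_hom q (- s * q\<^sup>2) (q\<^sup>2) n * \<beta> n) sums (\<Sum>k. K * f k)"
    using bailey_lemma_sums[OF q2 q \<rho>y anz' ynz x\<rho>nz bp S] unfolding weight .
  moreover have "qpoch (- s) (q\<^sup>2) n * qpoch_hom q (- s * q\<^sup>2) (q\<^sup>2) n = qpoch (- s) q (2 * n) * q ^ n" for n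
    using qpoch_hom_scale[of q "- s * q" "q\<^sup>2" n] unfolding qpoch_double by (simp add: power2_eq_square mult_ac)
  ultimately show ?thesis
    unfolding suminf_mult[OF summable[folded f_def]] by (simp add: K_def f_def[abs_def] sums_iff mult_ac)
qed

theorem lemma3p2:
  fixes a q s r :: complex and \<alpha> \<beta> :: "nat \<Rightarrow> complex"
  assumes hq: "norm q < 1" and hq0: "q \<noteq> 0"
    and hs: "s ^ 2 = a" and hr: "r ^ 2 = q"
  shows
  "(bailey_pair \<alpha> \<beta> a q \<and> (\<forall>j\<ge>1. a * q ^ j \<noteq> 1) \<longrightarrow>
     ((\<forall>n. 1 - s * q ^ n \<noteq> 0) \<longrightarrow>
       summable (\<lambda>n. qpoch s q n * (-1) ^ n * s ^ n * q ^ (n * (n + 1) div 2) * \<beta> n) \<longrightarrow>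
       summable (\<lambda>n. (1 - s) * (-1) ^ n * s ^ n * q ^ (n * (n + 1) div 2) * \<alpha> n / (1 - s * q ^ n)) \<longrightarrow>
       (\<Sum>n. qpoch s q n * (-1) ^ n * s ^ n * q ^ (n * (n + 1) div 2) * \<beta> n)
         = qpoch_inf (s * q) q / qpoch_inf (a * q) q *
           (\<Sum>n. (1 - s) * (-1) ^ n * s ^ n * q ^ (n * (n + 1) div 2) * \<alpha> n / (1 - s * q ^ n)))
   \<and> (summable (\<lambda>n. qpoch (s * r) q n * (-1) ^ n * s ^ n * r ^ (n\<^sup>2) * \<beta> n) \<longrightarrow>
       summable (\<lambda>n. (-1) ^ n * s ^ n * r ^ (n\<^sup>2) * \<alpha> n) \<longrightarrow>
       (\<Sum>n. qpoch (s * r) q n * (-1) ^ n * s ^ n * r ^ (n\<^sup>2) * \<beta> n)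
         = qpoch_inf (s * r) q / qpoch_inf (a * q) q *
           (\<Sum>n. (-1) ^ n * s ^ n * r ^ (n\<^sup>2) * \<alpha> n))
   \<and> (\<forall>z. z \<noteq> 0 \<longrightarrow>
       (\<forall>n. (1 - z * s * q ^ n / r) * (1 - z * s * q ^ n * r) * (1 - s * q ^ n / (z * r)) * (1 - s * q ^ n * r / z) \<noteq> 0) \<longrightarrow>
       summable (\<lambda>n. qpoch (z * s / r) q n * qpoch (s / (z * r)) q n * q ^ n * \<beta> n) \<longrightarrow>
       summable (\<lambda>n. (1 - (z + 1 / z) * s * q ^ n * r + a * q ^ (2 * n)) * q ^ n * \<alpha> n /
            ((1 - z * s * q ^ n / r) * (1 - z * s * q ^ n * r) * (1 - s * q ^ n / (z * r)) * (1 - s * q ^ n * r / z))) \<longrightarrow>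
       (\<Sum>n. qpoch (z * s / r) q n * qpoch (s / (z * r)) q n * q ^ n * \<beta> n)
         = qpoch_inf (z * s / r) q * qpoch_inf (s / (z * r)) q / (qpoch_inf q q * qpoch_inf (a * q) q) *
           (\<Sum>n. (1 - (z + 1 / z) * s * q ^ n * r + a * q ^ (2 * n)) * q ^ n * \<alpha> n /
            ((1 - z * s * q ^ n / r) * (1 - z * s * q ^ n * r) * (1 - s * q ^ n / (z * r)) * (1 - s * q ^ n * r / z))))
   \<and> (\<forall>z. z \<noteq> 0 \<longrightarrow>
       (\<forall>n. (1 - z * s * q ^ n / r) * (1 - z * s * q ^ n * r) * (1 - s * q ^ n / (z * r)) * (1 - s * q ^ n * r / z) \<noteq> 0) \<longrightarrow>
       summable (\<lambda>n. qpoch (z * s / r) q n * qpoch (s / (z * r)) q n * q ^ (2 * n) * \<beta> n) \<longrightarrow>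
       summable (\<lambda>n. (1 - q) * q ^ (2 * n) * \<alpha> n /
            ((1 - z * s * q ^ n / r) * (1 - z * s * q ^ n * r) * (1 - s * q ^ n / (z * r)) * (1 - s * q ^ n * r / z))) \<longrightarrow>
       (\<Sum>n. qpoch (z * s / r) q n * qpoch (s / (z * r)) q n * q ^ (2 * n) * \<beta> n)
         = qpoch_inf (z * s / r) q * qpoch_inf (s / (z * r)) q / (qpoch_inf q q * qpoch_inf (a * q) q) *
           (\<Sum>n. (1 - q) * q ^ (2 * n) * \<alpha> n /
            ((1 - z * s * q ^ n / r) * (1 - z * s * q ^ n * r) * (1 - s * q ^ n / (z * r)) * (1 - s * q ^ n * r / z))))
   \<and> ((\<forall>n. 1 - s * q ^ n / r \<noteq> 0 \<and> (1 - s ^ 3 * q ^ (3 * n) / r ^ 3) * (1 - s ^ 3 * q ^ (3 * n) * r ^ 3) \<noteq> 0) \<longrightarrow>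
       summable (\<lambda>n. qpoch (s ^ 3 / r ^ 3) (q ^ 3) n * q ^ n * \<beta> n / qpoch (s / r) q n) \<longrightarrow>
       summable (\<lambda>n. (1 - s * q ^ n / r) * (1 - s * q ^ n * r) * (1 + s * q ^ n * r + a * q ^ (2 * n)) * q ^ n * \<alpha> n /
            ((1 - s ^ 3 * q ^ (3 * n) / r ^ 3) * (1 - s ^ 3 * q ^ (3 * n) * r ^ 3))) \<longrightarrow>
       (\<Sum>n. qpoch (s ^ 3 / r ^ 3) (q ^ 3) n * q ^ n * \<beta> n / qpoch (s / r) q n)
         = qpoch_inf (s ^ 3 / r ^ 3) (q ^ 3) / (qpoch_inf q q * qpoch_inf (a * q) q * qpoch_inf (s / r) q) *
           (\<Sum>n. (1 - s * q ^ n / r) * (1 - s * q ^ n * r) * (1 + s * q ^ n * r + a * q ^ (2 * n)) * q ^ n * \<alpha> n /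
            ((1 - s ^ 3 * q ^ (3 * n) / r ^ 3) * (1 - s ^ 3 * q ^ (3 * n) * r ^ 3))))
   \<and> ((\<forall>n. 1 - s * q ^ n / r \<noteq> 0 \<and> (1 - s ^ 3 * q ^ (3 * n) / r ^ 3) * (1 - s ^ 3 * q ^ (3 * n) * r ^ 3) \<noteq> 0) \<longrightarrow>
       summable (\<lambda>n. qpoch (s ^ 3 / r ^ 3) (q ^ 3) n * q ^ (2 * n) * \<beta> n / qpoch (s / r) q n) \<longrightarrow>
       summable (\<lambda>n. (1 - q) * (1 - s * q ^ n / r) * (1 - s * q ^ n * r) * q ^ (2 * n) * \<alpha> n /
            ((1 - s ^ 3 * q ^ (3 * n) / r ^ 3) * (1 - s ^ 3 * q ^ (3 * n) * r ^ 3))) \<longrightarrow>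
       (\<Sum>n. qpoch (s ^ 3 / r ^ 3) (q ^ 3) n * q ^ (2 * n) * \<beta> n / qpoch (s / r) q n)
         = qpoch_inf (s ^ 3 / r ^ 3) (q ^ 3) / (qpoch_inf q q * qpoch_inf (a * q) q * qpoch_inf (s / r) q) *
           (\<Sum>n. (1 - q) * (1 - s * q ^ n / r) * (1 - s * q ^ n * r) * q ^ (2 * n) * \<alpha> n /
            ((1 - s ^ 3 * q ^ (3 * n) / r ^ 3) * (1 - s ^ 3 * q ^ (3 * n) * r ^ 3)))))
   \<and> (bailey_pair \<alpha> \<beta> a (q ^ 2) \<and> (\<forall>j\<ge>1. a * q ^ (2 * j) \<noteq> 1) \<longrightarrow>
     (\<forall>n. 1 + s * q ^ (2 * n) \<noteq> 0) \<longrightarrow>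
     summable (\<lambda>n. qpoch (- s) q (2 * n) * q ^ n * \<beta> n) \<longrightarrow>
     summable (\<lambda>n. (1 + s) * q ^ n * \<alpha> n / (1 + s * q ^ (2 * n))) \<longrightarrow>
     (\<Sum>n. qpoch (- s) q (2 * n) * q ^ n * \<beta> n)
       = qpoch_inf (- s * q) q / (qpoch_inf (a * q ^ 2) (q ^ 2) * qpoch_inf q (q ^ 2)) *
         (\<Sum>n. (1 + s) * q ^ n * \<alpha> n / (1 + s * q ^ (2 * n))))"
  by (intro conjI impI allI; elim conjE;
      rule bailey_pair_sum_sqrt_a[OF hq hs] bailey_pair_sum_sqrt_aq[OF hq hs hr]
        bailey_pair_sum_z_q[OF hq hq0 hs hr] bailey_pair_sum_z_q2[OF hq hq0 hs hr]
        bailey_pair_sum_cube_q[OF hq hq0 hs hr] bailey_pair_sum_cube_q2[OF hq hq0 hs hr]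
        bailey_pair_sum_base_q2[OF hq hs];
      assumption)

end
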